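(* Let $\mathcal H_1,\mathcal H_2$ be Hilbert spaces, $A\in\mathcal B(\mathcal H_1,\mathcal H_2)$ and $B$ its Moore--Penrose inverse. Then the operator $B^*(I+BB^* )^{-1/2}$ is bounded with closed range and has a bounded Moore--Penrose inverse given by $$T_B=B(I+B^*B)^{-1/2}+A^*(I+B^*B)^{-1/2}.$$ Moreover, the adjoint of $T_B$ is $T_{B^*}$, where $$T_{B^*}=B^*(I+BB^* )^{-1/2}+A(I+BB^* )^{-1/2}.$$
   Context: $\mathcal B(\mathcal H_1,\mathcal H_2)$ is the space of bounded linear operators. For a closed densely defined operator $A$ between Hilbert spaces, its Moore--Penrose inverse $A^\dagger$ is the unique closed densely defined operator with $\mathcal D(A^\dagger)=\mathcal R(A)\oplus\mathcal N(A^* )$, $\mathcal N(A^\dagger)=\mathcal N(A^* )$, $AA^\dagger A=A$, $A^\dagger AA^\dagger=A^\dagger$, $AA^\dagger\subset P_{\overline{\mathcal R(A)}}$, $A^\dagger A\subset P_{\overline{\mathcal R(A^\dagger)}}$. For closed densely defined $B$, $(I+BB^* )^{-1}$ and $(I+B^*B)^{-1}$ are everywhere defined, bounded, positive and self-adjoint, and their square roots are used. *)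

theory Defs
  imports "HOL-Analysis.Analysis"
begin

text \<open>Hilbert spaces are types of class real_inner and complete_space.
  A (possibly unbounded) linear operator from 'a to 'b is represented by its
  graph, a set of pairs; Domain/Range of the relation are domain and range.\<close>

definition fgraph :: "('a \<Rightarrow> 'b) \<Rightarrow> ('a \<times> 'b) set" where
  "fgraph f = {(x, f x) | x. True}"

definition is_operator :: "('a::real_vector \<times> 'b::real_vector) set \<Rightarrow> bool" where
  "is_operator G \<longleftrightarrow> subspace G \<and> (\<forall>y. (0, y) \<in> G \<longrightarrow> y = 0)"

definition closed_densely_defined ::
  "('a::real_normed_vector \<times> 'b::real_normed_vector) set \<Rightarrow> bool" where
  "closed_densely_defined G \<longleftrightarrow> is_operator G \<and> closed G \<and> closure (Domain G) = UNIV"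

definition bounded_op :: "('a::real_normed_vector \<times> 'b::real_normed_vector) set \<Rightarrow> bool" where
  "bounded_op G \<longleftrightarrow> (\<exists>f. bounded_linear f \<and> G = fgraph f)"

definition op_kernel :: "('a \<times> 'b::zero) set \<Rightarrow> 'a set" where
  "op_kernel G = {x. (x, 0) \<in> G}"

definition op_adjoint :: "('a::real_inner \<times> 'b::real_inner) set \<Rightarrow> ('b \<times> 'a) set" where
  "op_adjoint G = {(y, z). \<forall>(x, w) \<in> G. inner w y = inner x z}"

text \<open>Operator product: op_comp S T is S T (first apply T, then S).\<close>
definition op_comp :: "('b \<times> 'c) set \<Rightarrow> ('a \<times> 'b) set \<Rightarrow> ('a \<times> 'c) set" where
  "op_comp S T = T O S"

definition op_add :: "('a \<times> 'b::plus) set \<Rightarrow> ('a \<times> 'b) set \<Rightarrow> ('a \<times> 'b) set" where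
  "op_add S T = {(x, y + z) | x y z. (x, y) \<in> S \<and> (x, z) \<in> T}"

definition orth_proj :: "'a::real_inner set \<Rightarrow> ('a \<times> 'a) set" where
  "orth_proj M = {(x, p). p \<in> M \<and> (\<forall>m\<in>M. inner (x - p) m = 0)}"

definition is_mp_inverse ::
  "('a::real_inner \<times> 'b::real_inner) set \<Rightarrow> ('b \<times> 'a) set \<Rightarrow> bool" where
  "is_mp_inverse A Ad \<longleftrightarrow>
     closed_densely_defined A \<and> closed_densely_defined Ad \<and>
     Domain Ad = {u + v | u v. u \<in> Range A \<and> v \<in> op_kernel (op_adjoint A)} \<and>
     op_kernel Ad = op_kernel (op_adjoint A) \<and>
     op_comp A (op_comp Ad A) = A \<and>
     op_comp Ad (op_comp A Ad) = Ad \<and>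
     op_comp A Ad \<subseteq> orth_proj (closure (Range A)) \<and>
     op_comp Ad A \<subseteq> orth_proj (closure (Range Ad))"

definition op_sqrt :: "('a::real_inner \<times> 'a) set \<Rightarrow> ('a \<times> 'a) set" where
  "op_sqrt R = (THE S. \<exists>s. bounded_linear s \<and> S = fgraph s \<and>
       (\<forall>x y. inner (s x) y = inner x (s y)) \<and> (\<forall>x. 0 \<le> inner (s x) x) \<and>
       op_comp S S = R)"

definition inv_sqrt_I_plus_TTs :: "('a::real_inner \<times> 'b::real_inner) set \<Rightarrow> ('b \<times> 'b) set" where
  "inv_sqrt_I_plus_TTs T = op_sqrt (converse (op_add Id (op_comp T (op_adjoint T))))"

definition inv_sqrt_I_plus_TsT :: "('a::real_inner \<times> 'b::real_inner) set \<Rightarrow> ('a \<times> 'a) set" where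
  "inv_sqrt_I_plus_TsT T = op_sqrt (converse (op_add Id (op_comp (op_adjoint T) T)))"

end

theory Submission
  imports Defs
begin

text \<open>Everything is expressed through the bounded operator \<open>A\<close>.  With \<open>P1\<close>, \<open>P2\<close> the
  projections onto \<open>N(A)\<^sup>\<bottom>\<close> and \<open>N(A\<^sup>*)\<^sup>\<bottom>\<close>, the graph of \<open>B = A\<^sup>\<dagger>\<close> consists of the pairs
  \<open>(A x + v, P1 x)\<close> with \<open>A\<^sup>* v = 0\<close>, and one computes
  \<open>(I + BB\<^sup>*)\<^sup>-\<^sup>1 = I - (I + A\<^sup>*A)\<^sup>-\<^sup>1 P1\<close> and \<open>(I + B\<^sup>*B)\<^sup>-\<^sup>1 = I - (I + AA\<^sup>*)\<^sup>-\<^sup>1 P2\<close>.  Both have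
  the form \<open>I - Q\<close> with \<open>0 \<le> Q \<le> I\<close>, so their square roots are given by the binomial series
  of \<open>(1 - t)\<^sup>1\<^sup>/\<^sup>2\<close> in \<open>Q\<close> and commute with every bounded operator intertwining the \<open>Q\<close>'s.
  The unbounded factor in \<open>C = B\<^sup>*(I + BB\<^sup>*)\<^sup>-\<^sup>1\<^sup>/\<^sup>2\<close> is tamed by the estimate
  \<open>\<parallel>(I + BB\<^sup>*)\<^sup>-\<^sup>1\<^sup>/\<^sup>2 P1 u\<parallel> \<le> \<parallel>A u\<parallel>\<close>, which makes \<open>C\<^sup>*\<close> a contraction factoring through \<open>A\<close>.
  Then \<open>CC\<^sup>* = (I + AA\<^sup>*)\<^sup>-\<^sup>1 P2\<close>, and this yields \<open>C T\<^sub>B = P2\<close> and \<open>T\<^sub>B C = P1\<close>: \<open>C\<close> and \<open>T\<^sub>B\<close> are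
  bounded with closed ranges \<open>N(A\<^sup>*)\<^sup>\<bottom>\<close> and \<open>N(A)\<^sup>\<bottom>\<close>, hence Moore--Penrose inverses of each
  other.\<close>

section \<open>Orthogonal projections\<close>

lemma linear_coeff_zero_of_quadratic_bound:
  fixes a b :: real
  assumes "\<And>t. 2 * t * b \<le> t * t * a" and "0 \<le> a"
  shows "b = 0"
proof -
  define t where "t = b / (a + 1)"
  have b: "b = t * (a + 1)" using assms(2) by (simp add: t_def)
  have "t * t * (a + 2) \<le> 0" using assms(1)[of t] by (simp add: b algebra_simps)
  moreover have "a + 2 > 0" using assms(2) by simp
  ultimately have "t * t \<le> 0" by (simp add: mult_le_0_iff)
  hence "t = 0" by (metis mult_eq_0_iff order_antisym_conv zero_le_square)
  thus ?thesis using b by simp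
qed

lemma closed_orthogonal_comp: "closed (S\<^sup>\<bottom>)" for S :: "'a::real_inner set"
proof -
  have "S\<^sup>\<bottom> = (\<Inter>s\<in>S. {x. inner s x = 0})"
    by (auto simp: orthogonal_comp_def orthogonal_def)
  moreover have "closed {x. inner s x = (0::real)}" for s :: 'a
    by (intro closed_Collect_eq continuous_intros)
  ultimately show ?thesis by auto
qed

lemma orthogonal_comp_closure: "(closure S)\<^sup>\<bottom> = S\<^sup>\<bottom>" for S :: "'a::real_inner set"
proof
  show "(closure S)\<^sup>\<bottom> \<subseteq> S\<^sup>\<bottom>" by (rule orthogonal_comp_anti_mono[OF closure_subset])
  show "S\<^sup>\<bottom> \<subseteq> (closure S)\<^sup>\<bottom>"
  proof
    fix x assume x: "x \<in> S\<^sup>\<bottom>"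
    have "closed {s. inner s x = 0}" by (intro closed_Collect_eq continuous_intros)
    moreover have "S \<subseteq> {s. inner s x = 0}" using x by (auto simp: orthogonal_comp_def orthogonal_def)
    ultimately have "closure S \<subseteq> {s. inner s x = 0}" by (rule closure_minimal[rotated])
    thus "x \<in> (closure S)\<^sup>\<bottom>" by (auto simp: orthogonal_comp_def orthogonal_def)
  qed
qed

lemma subspace_closure:
  fixes V :: "'a::real_normed_vector set"
  assumes "subspace V"
  shows "subspace (closure V)"
proof -
  have comb: "a *\<^sub>R u + v \<in> closure V" if uv: "u \<in> closure V" "v \<in> closure V" for a u v
  proof -
    obtain us where us: "\<forall>n. us n \<in> V" "us \<longlonglongrightarrow> u"
      using uv(1) unfolding closure_sequential by blast
    obtain vs where vs: "\<forall>n. vs n \<in> V" "vs \<longlonglongrightarrow> v"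
      using uv(2) unfolding closure_sequential by blast
    with us have "\<forall>n. a *\<^sub>R us n + vs n \<in> V" "(\<lambda>n. a *\<^sub>R us n + vs n) \<longlonglongrightarrow> a *\<^sub>R u + v"
      using assms by (auto simp: subspace_add subspace_scale intro!: tendsto_intros)
    thus ?thesis unfolding closure_sequential by (intro exI[of _ "\<lambda>n. a *\<^sub>R us n + vs n"]) simp
  qed
  have "0 \<in> closure V" using assms closure_subset subspace_0 by blast
  thus ?thesis
    using comb[where a = 1] comb[where v = 0] unfolding subspace_def by auto
qed

lemma parallelogram_midpoint:
  fixes x a b :: "'a::real_inner"
  shows "norm (a - b)^2 =
    2 * norm (x - a)^2 + 2 * norm (x - b)^2 - 4 * norm (x - (1/2) *\<^sub>R (a + b))^2"
  by (simp add: power2_norm_eq_inner inner_add_left inner_add_right inner_diff_left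
      inner_diff_right inner_commute algebra_simps)

lemma Cauchy_near_minimizers:
  fixes M :: "'a::real_inner set"
  assumes M: "subspace M" and ms: "\<And>n. ms n \<in> M"
    and d: "0 \<le> d" "\<And>m. m \<in> M \<Longrightarrow> d \<le> norm (x - m)"
    and near: "\<And>n. norm (x - ms n)^2 < d^2 + 1 / Suc n"
  shows "Cauchy ms"
proof (rule metric_CauchyI)
  have close: "norm (ms n - ms k)^2 \<le> 2 / Suc n + 2 / Suc k" for n k
  proof -
    have "(1/2) *\<^sub>R (ms n + ms k) \<in> M" using M ms by (simp add: subspace_add subspace_scale)
    hence "d^2 \<le> norm (x - (1/2) *\<^sub>R (ms n + ms k))^2" by (rule power_mono[OF d(2) d(1)])
    thus ?thesis using parallelogram_midpoint[of "ms n" "ms k" x] near[of n] near[of k] by linarith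
  qed
  fix e :: real assume e: "0 < e"
  obtain N :: nat where N: "4 / e^2 < N" using reals_Archimedean2 by blast
  have "dist (ms m) (ms n) < e" if "N \<le> m" "N \<le> n" for m n
  proof -
    have "4 / e^2 < Suc m" "4 / e^2 < Suc n" using N that by linarith+
    hence "2 / Suc m < e^2 / 2" "2 / Suc n < e^2 / 2" using e by (auto simp: field_simps)
    hence "norm (ms m - ms n)^2 < e^2" using close[of m n] by linarith
    thus ?thesis using e by (simp add: dist_norm power_less_imp_less_base)
  qed
  thus "\<exists>N. \<forall>m\<ge>N. \<forall>n\<ge>N. dist (ms m) (ms n) < e" by blast
qed

lemma nearest_point_subspace_exists:
  fixes M :: "'a::{real_inner,complete_space} set"
  assumes M: "subspace M" "closed M"
  obtains p where "p \<in> M" "\<And>m. m \<in> M \<Longrightarrow> norm (x - p) \<le> norm (x - m)"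
proof -
  define d where "d = Inf ((\<lambda>m. norm (x - m)) ` M)"
  have bdd: "bdd_below ((\<lambda>m. norm (x - m)) ` M)" by (rule bdd_belowI[of _ 0]) auto
  have d_le: "d \<le> norm (x - m)" if "m \<in> M" for m
    unfolding d_def using bdd that by (simp add: cInf_lower)
  have "0 \<in> M" using M by (simp add: subspace_0)
  hence d0: "0 \<le> d" unfolding d_def by (intro cInf_greatest) auto
  have "\<exists>m\<in>M. norm (x - m)^2 < d^2 + e" if "e > 0" for e
  proof -
    have "d < sqrt (d^2 + e)" using that by (intro real_less_rsqrt) simp
    hence "Inf ((\<lambda>m. norm (x - m)) ` M) < sqrt (d^2 + e)" by (simp add: d_def)
    then obtain m where m: "m \<in> M" "norm (x - m) < sqrt (d^2 + e)"
      using \<open>0 \<in> M\<close> by (subst (asm) cInf_less_iff) (auto simp: bdd)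
    hence "norm (x - m)^2 < (sqrt (d^2 + e))^2" by (intro power_strict_mono) auto
    hence "norm (x - m)^2 < d^2 + e" using that by (simp add: add_nonneg_pos less_imp_le)
    thus ?thesis using m by blast
  qed
  hence "\<forall>n. \<exists>m\<in>M. norm (x - m)^2 < d^2 + 1 / Suc n" by simp
  then obtain ms where ms: "\<And>n. ms n \<in> M" "\<And>n. norm (x - ms n)^2 < d^2 + 1 / Suc n"
    by metis
  have "Cauchy ms" using Cauchy_near_minimizers[OF M(1) ms(1) d0 d_le ms(2)] .
  then obtain p where p: "ms \<longlonglongrightarrow> p" using Cauchy_convergent_iff convergent_def by blast
  have "p \<in> M" using M(2) ms(1) p by (metis closed_sequentially)
  have "(\<lambda>n. norm (x - ms n)^2) \<longlonglongrightarrow> norm (x - p)^2" by (intro tendsto_intros p)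
  moreover have "(\<lambda>n. d^2 + 1 / Suc n) \<longlonglongrightarrow> d^2 + 0"
    by (intro tendsto_intros LIMSEQ_Suc[OF lim_const_over_n])
  ultimately have "norm (x - p)^2 \<le> d^2"
    using ms(2) by (intro LIMSEQ_le[of "\<lambda>n. norm (x - ms n)^2" _ "\<lambda>n. d^2 + 1 / Suc n"])
      (auto intro: less_imp_le)
  hence "norm (x - p) \<le> d" using d0 by (rule power2_le_imp_le)
  hence "norm (x - p) \<le> norm (x - m)" if "m \<in> M" for m using d_le[OF that] by linarith
  with \<open>p \<in> M\<close> show ?thesis by (rule that)
qed

lemma nearest_point_subspace_orthogonal:
  fixes M :: "'a::real_inner set"
  assumes "subspace M" "p \<in> M" "\<And>m. m \<in> M \<Longrightarrow> norm (x - p) \<le> norm (x - m)"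
  shows "x - p \<in> M\<^sup>\<bottom>"
proof -
  have "inner m (x - p) = 0" if m: "m \<in> M" for m
  proof (rule linear_coeff_zero_of_quadratic_bound)
    fix t
    have "p + t *\<^sub>R m \<in> M" using assms(1,2) m by (simp add: subspace_add subspace_scale)
    hence "norm (x - p) \<le> norm ((x - p) - t *\<^sub>R m)" using assms(3) by (simp add: algebra_simps)
    hence "norm (x - p)^2 \<le> norm ((x - p) - t *\<^sub>R m)^2" by (rule power_mono) simp
    thus "2 * t * inner m (x - p) \<le> t * t * inner m m"
      by (simp add: power2_norm_eq_inner inner_diff_left inner_diff_right inner_commute
          algebra_simps)
  qed simp
  thus ?thesis by (simp add: orthogonal_comp_def orthogonal_def)
qed

definition proj_onto :: "'a::real_inner set \<Rightarrow> 'a \<Rightarrow> 'a" where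
  "proj_onto M x = (SOME p. p \<in> M \<and> x - p \<in> M\<^sup>\<bottom>)"

context
  fixes M :: "'a::{real_inner,complete_space} set"
  assumes subspace_M: "subspace M" and closed_M: "closed M"
begin

lemma proj_onto:
  shows proj_onto_in: "proj_onto M x \<in> M"
    and proj_onto_orthogonal: "x - proj_onto M x \<in> M\<^sup>\<bottom>"
proof -
  obtain p where "p \<in> M" "\<And>m. m \<in> M \<Longrightarrow> norm (x - p) \<le> norm (x - m)"
    using nearest_point_subspace_exists[OF subspace_M closed_M] by blast
  hence "\<exists>p. p \<in> M \<and> x - p \<in> M\<^sup>\<bottom>" using nearest_point_subspace_orthogonal subspace_M by blast
  hence "proj_onto M x \<in> M \<and> x - proj_onto M x \<in> M\<^sup>\<bottom>"
    unfolding proj_onto_def by (rule someI_ex)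
  thus "proj_onto M x \<in> M" "x - proj_onto M x \<in> M\<^sup>\<bottom>" by auto
qed

lemma proj_onto_unique:
  assumes "p \<in> M" "x - p \<in> M\<^sup>\<bottom>"
  shows "proj_onto M x = p"
proof -
  have "proj_onto M x - p \<in> M" using subspace_M assms(1) proj_onto_in by (simp add: subspace_diff)
  moreover have "(x - p) - (x - proj_onto M x) \<in> M\<^sup>\<bottom>"
    by (rule subspace_diff[OF subspace_orthogonal_comp assms(2) proj_onto_orthogonal])
  ultimately have "proj_onto M x - p \<in> M \<inter> M\<^sup>\<bottom>" by simp
  thus ?thesis using orthogonal_Int_0[OF subspace_M] by auto
qed

lemma proj_onto_id: "m \<in> M \<Longrightarrow> proj_onto M m = m"
  by (rule proj_onto_unique) (auto simp: orthogonal_comp_def orthogonal_def)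

lemma proj_onto_eq_0_iff: "proj_onto M x = 0 \<longleftrightarrow> x \<in> M\<^sup>\<bottom>"
  using proj_onto_orthogonal[of x] proj_onto_unique[of 0 x] subspace_0[OF subspace_M] by auto

lemma norm_proj_onto_le: "norm (proj_onto M x) \<le> norm x"
proof -
  have "inner (proj_onto M x) (x - proj_onto M x) = 0"
    using proj_onto_in proj_onto_orthogonal by (simp add: orthogonal_comp_def orthogonal_def)
  hence "norm x ^ 2 = norm (proj_onto M x)^2 + norm (x - proj_onto M x)^2"
    by (simp add: power2_norm_eq_inner inner_diff_left inner_diff_right inner_commute)
  thus ?thesis by (simp add: power2_le_imp_le)
qed

lemma bounded_linear_proj_onto: "bounded_linear (proj_onto M)"
proof (rule bounded_linear_intro[where K=1])
  fix x y
  show "proj_onto M (x + y) = proj_onto M x + proj_onto M y"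
    using subspace_add[OF subspace_M proj_onto_in proj_onto_in]
      subspace_add[OF subspace_orthogonal_comp proj_onto_orthogonal proj_onto_orthogonal]
    by (intro proj_onto_unique) (simp_all add: algebra_simps)
next
  fix r x
  show "proj_onto M (r *\<^sub>R x) = r *\<^sub>R proj_onto M x"
    using subspace_scale[OF subspace_M proj_onto_in]
      subspace_scale[OF subspace_orthogonal_comp proj_onto_orthogonal]
    by (intro proj_onto_unique) (simp_all add: algebra_simps)
qed (simp add: norm_proj_onto_le)

lemma proj_onto_selfadjoint: "inner (proj_onto M x) y = inner x (proj_onto M y)"
proof -
  have "inner (proj_onto M x) (y - proj_onto M y) = 0" "inner (x - proj_onto M x) (proj_onto M y) = 0"
    using proj_onto_in proj_onto_orthogonal
    by (auto simp: orthogonal_comp_def orthogonal_def inner_commute)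
  thus ?thesis by (simp add: inner_diff_left inner_diff_right)
qed

lemma orthogonal_comp_orthogonal_comp: "M\<^sup>\<bottom>\<^sup>\<bottom> = M"
proof
  show "M\<^sup>\<bottom>\<^sup>\<bottom> \<subseteq> M"
  proof
    fix x assume x: "x \<in> M\<^sup>\<bottom>\<^sup>\<bottom>"
    have "x - proj_onto M x \<in> M\<^sup>\<bottom>\<^sup>\<bottom>"
      using x proj_onto_in orthogonal_comp_subset subspace_diff[OF subspace_orthogonal_comp] by blast
    hence "x - proj_onto M x = 0"
      using proj_onto_orthogonal orthogonal_Int_0[OF subspace_orthogonal_comp] by blast
    thus "x \<in> M" using proj_onto_in by (metis eq_iff_diff_eq_0)
  qed
qed (rule orthogonal_comp_subset)

lemma orth_proj_eq_fgraph: "orth_proj M = fgraph (proj_onto M)"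
  using proj_onto_unique proj_onto_in proj_onto_orthogonal
  by (auto simp: orth_proj_def fgraph_def orthogonal_comp_def orthogonal_def inner_commute)

end

section \<open>Adjoints of bounded operators\<close>

lemma riesz_representation:
  fixes g :: "'a::{real_inner,complete_space} \<Rightarrow> real"
  assumes "bounded_linear g"
  obtains y where "\<And>x. g x = inner x y"
proof (cases "\<forall>x. g x = 0")
  case True thus ?thesis using that[of 0] by simp
next
  case False
  then obtain z where z: "g z \<noteq> 0" by blast
  interpret g: bounded_linear g by (rule assms)
  define N where "N = {x. g x = 0}"
  have N: "subspace N" "closed N" unfolding N_def subspace_def
    by (auto simp: g.add g.scale intro!: closed_Collect_eq continuous_intros g.continuous_on)
  define w where "w = z - proj_onto N z"
  have w: "w \<in> N\<^sup>\<bottom>" unfolding w_def by (rule proj_onto_orthogonal[OF N])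
  have "g (proj_onto N z) = 0" using proj_onto_in[OF N] by (simp add: N_def)
  hence gw: "g w = g z" by (simp add: w_def g.diff)
  have "g x = inner x ((g w / inner w w) *\<^sub>R w)" for x
  proof -
    have "x - (g x / g w) *\<^sub>R w \<in> N" using gw z by (simp add: N_def g.diff g.scale)
    hence "inner (x - (g x / g w) *\<^sub>R w) w = 0"
      using w by (simp add: orthogonal_comp_def orthogonal_def)
    hence "inner x w = (g x / g w) * inner w w" by (simp add: inner_diff_left)
    thus ?thesis using gw z by auto
  qed
  thus ?thesis by (rule that)
qed

definition selfadjoint :: "('a::real_inner \<Rightarrow> 'a) \<Rightarrow> bool" where
  "selfadjoint f \<longleftrightarrow> (\<forall>x y. inner (f x) y = inner x (f y))"

definition nonneg_op :: "('a::real_inner \<Rightarrow> 'a) \<Rightarrow> bool" where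
  "nonneg_op f \<longleftrightarrow> (\<forall>x. 0 \<le> inner (f x) x)"

lemma inner_right_eqI: "(\<And>x. inner x a = inner x b) \<Longrightarrow> a = b" for a b :: "'a::real_inner"
  by (metis inner_diff_right inner_eq_zero_iff right_minus_eq)

context
  fixes f :: "'a::{real_inner,complete_space} \<Rightarrow> 'b::real_inner"
  assumes bounded_linear_f: "bounded_linear f"
begin

lemma adjoint_works_hilbert: "inner (f x) y = inner x (adjoint f y)"
proof -
  have "\<forall>y. \<exists>z. \<forall>x. inner (f x) y = inner x z"
    using riesz_representation[OF
        bounded_linear_compose[OF bounded_linear_inner_left bounded_linear_f]]
    by metis
  then obtain g where "\<forall>y x. inner (f x) y = inner x (g y)" by metis
  hence "adjoint f = g" by (intro adjoint_unique) auto
  thus ?thesis using \<open>\<forall>y x. _\<close> by simp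
qed

lemma adjoint_works_hilbert': "inner (adjoint f y) x = inner y (f x)"
  by (metis adjoint_works_hilbert inner_commute)

lemma adjoint_eqI: "(\<And>x. inner (f x) y = inner x z) \<Longrightarrow> adjoint f y = z"
  by (rule inner_right_eqI) (metis adjoint_works_hilbert)

lemma bounded_linear_adjoint: "bounded_linear (adjoint f)"
proof -
  obtain K where K: "\<And>x. norm (f x) \<le> norm x * K" "K > 0"
    using bounded_linear.pos_bounded[OF bounded_linear_f] by blast
  show ?thesis
  proof (rule bounded_linear_intro[where K=K])
    fix y1 y2 show "adjoint f (y1 + y2) = adjoint f y1 + adjoint f y2"
      by (rule adjoint_eqI) (simp add: inner_add_right adjoint_works_hilbert)
  next
    fix r y show "adjoint f (r *\<^sub>R y) = r *\<^sub>R adjoint f y"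
      by (rule adjoint_eqI) (simp add: adjoint_works_hilbert)
  next
    fix y
    have "norm (adjoint f y)^2 = inner (f (adjoint f y)) y"
      by (simp add: adjoint_works_hilbert power2_norm_eq_inner)
    also have "\<dots> \<le> norm (f (adjoint f y)) * norm y" by (rule norm_cauchy_schwarz)
    also have "\<dots> \<le> norm (adjoint f y) * K * norm y" using K by (simp add: mult_right_mono)
    finally show "norm (adjoint f y) \<le> norm y * K"
      using K(2) by (cases "adjoint f y = 0") (auto simp: power2_eq_square algebra_simps)
  qed
qed

lemma adjoint_eq_0_iff: "adjoint f y = 0 \<longleftrightarrow> y \<in> (range f)\<^sup>\<bottom>"
proof -
  have "adjoint f y = 0 \<longleftrightarrow> (\<forall>x. inner (f x) y = 0)"
    using adjoint_eqI[of y 0] by (auto simp: adjoint_works_hilbert)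
  thus ?thesis by (auto simp: orthogonal_comp_def orthogonal_def)
qed

lemma op_adjoint_fgraph: "op_adjoint (fgraph f) = fgraph (adjoint f)"
  using adjoint_eqI adjoint_works_hilbert by (auto simp: op_adjoint_def fgraph_def)

end

lemma adjoint_adjoint_hilbert:
  fixes f :: "'a::{real_inner,complete_space} \<Rightarrow> 'b::{real_inner,complete_space}"
  assumes "bounded_linear f"
  shows "adjoint (adjoint f) = f"
  by (rule adjoint_unique) (simp add: adjoint_works_hilbert' assms)

lemma adjoint_compose_hilbert:
  fixes f :: "'b::{real_inner,complete_space} \<Rightarrow> 'c::real_inner"
    and g :: "'a::{real_inner,complete_space} \<Rightarrow> 'b"
  assumes "bounded_linear f" "bounded_linear g"
  shows "adjoint (\<lambda>x. f (g x)) = (\<lambda>y. adjoint g (adjoint f y))"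
  using assms by (intro adjoint_unique) (simp add: adjoint_works_hilbert)

lemma adjoint_add_hilbert:
  fixes f g :: "'a::{real_inner,complete_space} \<Rightarrow> 'b::real_inner"
  assumes "bounded_linear f" "bounded_linear g"
  shows "adjoint (\<lambda>x. f x + g x) = (\<lambda>y. adjoint f y + adjoint g y)"
  using assms by (intro adjoint_unique) (simp add: adjoint_works_hilbert inner_add_left inner_add_right)

lemma adjoint_selfadjoint: "selfadjoint f \<Longrightarrow> adjoint f = f"
  by (rule adjoint_unique) (simp add: selfadjoint_def)

lemma adjoint_inject_hilbert:
  fixes f g :: "'a::{real_inner,complete_space} \<Rightarrow> 'b::{real_inner,complete_space}"
  assumes "bounded_linear f" "bounded_linear g" "adjoint f = adjoint g"
  shows "f = g"
  using adjoint_adjoint_hilbert[OF assms(1)] adjoint_adjoint_hilbert[OF assms(2)] assms(3) by metis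

section \<open>Operators given by their graphs\<close>

lemma fgraph_iff: "(x, y) \<in> fgraph f \<longleftrightarrow> y = f x"
  by (auto simp: fgraph_def)

lemma fgraph_eqI: "(\<And>x y. (x, y) \<in> G \<longleftrightarrow> y = f x) \<Longrightarrow> G = fgraph f"
  by (auto simp: fgraph_def)

lemma fgraph_inject: "fgraph f = fgraph g \<Longrightarrow> f = g"
  by (metis fgraph_iff ext)

lemma op_comp_fgraph: "op_comp (fgraph f) (fgraph g) = fgraph (\<lambda>x. f (g x))"
  by (auto simp: op_comp_def fgraph_def)

lemma op_add_fgraph: "op_add (fgraph f) (fgraph g) = fgraph (\<lambda>x. f x + g x)"
  by (auto simp: op_add_def fgraph_def)

lemma op_kernel_fgraph: "op_kernel (fgraph f) = {x. f x = 0}"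
  by (auto simp: op_kernel_def fgraph_def)

lemma Domain_fgraph: "Domain (fgraph f) = UNIV"
  by (auto simp: fgraph_def)

lemma Range_fgraph: "Range (fgraph f) = range f"
  by (auto simp: fgraph_def)

lemma closed_densely_defined_fgraph:
  fixes f :: "'a::real_normed_vector \<Rightarrow> 'b::real_normed_vector"
  assumes "bounded_linear f"
  shows "closed_densely_defined (fgraph f)"
proof -
  interpret bounded_linear f by (rule assms)
  have graph: "fgraph f = {p. snd p = f (fst p)}" by (auto simp: fgraph_def)
  have "closed (fgraph f)" unfolding graph
    by (intro closed_Collect_eq continuous_intros continuous_on_compose2[OF continuous_on]) auto
  moreover have "subspace (fgraph f)"
    unfolding subspace_def graph by (auto simp: add scale zero)
  ultimately show ?thesis
    unfolding closed_densely_defined_def is_operator_def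
    by (auto simp: Domain_fgraph fgraph_iff zero)
qed

lemma is_mp_inverse_fgraphI:
  fixes f :: "'a::{real_inner,complete_space} \<Rightarrow> 'b::{real_inner,complete_space}"
    and g :: "'b \<Rightarrow> 'a"
  assumes f: "bounded_linear f" "closed (range f)"
    and g: "bounded_linear g" "closed (range g)"
    and fg: "\<And>y. f (g y) = proj_onto (range f) y"
    and gf: "\<And>x. g (f x) = proj_onto (range g) x"
  shows "is_mp_inverse (fgraph f) (fgraph g)"
proof -
  have sub_f: "subspace (range f)" and sub_g: "subspace (range g)"
    using f(1) g(1) by (simp_all add: bounded_linear.linear linear_subspace_image)
  have fgf: "f (g (f x)) = f x" for x using fg proj_onto_id[OF sub_f f(2)] by simp
  have gfg: "g (f (g y)) = g y" for y using gf proj_onto_id[OF sub_g g(2)] by simp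
  have ker: "g y = 0 \<longleftrightarrow> adjoint f y = 0" for y
  proof
    assume "g y = 0"
    hence "proj_onto (range f) y = 0" using fg[of y] linear_0[OF bounded_linear.linear[OF f(1)]] by simp
    thus "adjoint f y = 0" using proj_onto_eq_0_iff[OF sub_f f(2)] adjoint_eq_0_iff[OF f(1)] by simp
  next
    assume "adjoint f y = 0"
    hence "f (g y) = 0" using fg proj_onto_eq_0_iff[OF sub_f f(2)] adjoint_eq_0_iff[OF f(1)] by simp
    thus "g y = 0" using gfg[of y] linear_0[OF bounded_linear.linear[OF g(1)]] by simp
  qed
  have "y \<in> {u + v |u v. u \<in> range f \<and> adjoint f v = 0}" for y
  proof -
    have "adjoint f (y - proj_onto (range f) y) = 0"
      using proj_onto_orthogonal[OF sub_f f(2)] adjoint_eq_0_iff[OF f(1)] by blast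
    moreover have "y = proj_onto (range f) y + (y - proj_onto (range f) y)" by simp
    ultimately show ?thesis using proj_onto_in[OF sub_f f(2)] by blast
  qed
  hence dom: "Domain (fgraph g) =
      {u + v |u v. u \<in> Range (fgraph f) \<and> v \<in> op_kernel (op_adjoint (fgraph f))}"
    by (auto simp: Domain_fgraph Range_fgraph op_adjoint_fgraph[OF f(1)] op_kernel_fgraph)
  show ?thesis
    unfolding is_mp_inverse_def
  proof (intro conjI)
    show "op_comp (fgraph f) (op_comp (fgraph g) (fgraph f)) = fgraph f"
      "op_comp (fgraph g) (op_comp (fgraph f) (fgraph g)) = fgraph g"
      by (simp_all add: op_comp_fgraph fgf gfg)
    show "op_comp (fgraph f) (fgraph g) \<subseteq> orth_proj (closure (Range (fgraph f)))"
      "op_comp (fgraph g) (fgraph f) \<subseteq> orth_proj (closure (Range (fgraph g)))"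
      using fg gf by (simp_all add: op_comp_fgraph Range_fgraph closure_closed f(2) g(2)
          orth_proj_eq_fgraph sub_f sub_g)
    show "op_kernel (fgraph g) = op_kernel (op_adjoint (fgraph f))"
      using ker by (simp add: op_adjoint_fgraph[OF f(1)] op_kernel_fgraph)
  qed (simp_all add: closed_densely_defined_fgraph f(1) g(1) dom)
qed

section \<open>Inverse of a coercive operator\<close>

lemma norm_le_coercive:
  assumes "inner x x \<le> inner (T x) x"
  shows "norm x \<le> norm (T x)"
proof -
  have "norm x * norm x \<le> inner (T x) x"
    using assms by (simp add: power2_norm_eq_inner[symmetric] power2_eq_square)
  also have "\<dots> \<le> norm (T x) * norm x" by (rule norm_cauchy_schwarz)
  finally show ?thesis by (cases "x = 0") auto
qed

lemma coercive_imp_bij: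
  fixes T :: "'a::{real_inner,complete_space} \<Rightarrow> 'a"
  assumes T: "bounded_linear T" and coercive: "\<And>x. inner x x \<le> inner (T x) x"
  shows "bij T"
proof (rule bijI)
  interpret T: bounded_linear T by (rule T)
  have below: "norm x \<le> norm (T x)" for x by (rule norm_le_coercive[OF coercive])
  show "inj T"
  proof (rule injI)
    fix x y assume "T x = T y"
    hence "norm (x - y) \<le> 0" using below[of "x - y"] by (simp add: T.diff)
    thus "x = y" by simp
  qed
  have "complete (range T)"
    by (rule complete_isometric_image[of 1]) (simp_all add: T below complete_UNIV)
  hence "closed (range T)" by (simp add: complete_eq_closed)
  moreover have "subspace (range T)" by (simp add: T.linear_axioms linear_subspace_image)
  moreover have "(range T)\<^sup>\<bottom> = {0}"
  proof -
    have "z = 0" if "z \<in> (range T)\<^sup>\<bottom>" for z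
      using that coercive[of z] by (simp add: orthogonal_comp_def orthogonal_def inner_commute)
        (meson inner_gt_zero_iff not_le)
    thus ?thesis using subspace_0[OF subspace_orthogonal_comp] by blast
  qed
  ultimately show "surj T" using orthogonal_comp_orthogonal_comp[of "range T"] by simp
qed

lemma coercive_selfadjoint_inverse:
  fixes T :: "'a::{real_inner,complete_space} \<Rightarrow> 'a"
  assumes T: "bounded_linear T" "selfadjoint T"
    and coercive: "\<And>x. inner x x \<le> inner (T x) x"
  shows "bounded_linear (inv T)" "\<And>y. T (inv T y) = y" "\<And>x. inv T (T x) = x"
    "\<And>y. norm (inv T y) \<le> norm y" "selfadjoint (inv T)"
proof -
  interpret T: bounded_linear T by (rule T(1))
  have "bij T" by (rule coercive_imp_bij[OF T(1) coercive])
  show inv_right: "\<And>y. T (inv T y) = y" using \<open>bij T\<close> by (simp add: bij_is_surj surj_f_inv_f)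
  show inv_left: "\<And>x. inv T (T x) = x" using \<open>bij T\<close> by (simp add: bij_is_inj)
  show norm_inv: "norm (inv T y) \<le> norm y" for y
    using norm_le_coercive[of "inv T y" T, OF coercive] by (simp add: inv_right)
  show "bounded_linear (inv T)"
  proof (rule bounded_linear_intro[where K=1])
    fix x y show "inv T (x + y) = inv T x + inv T y" by (metis inv_left inv_right T.add)
  next
    fix r x show "inv T (r *\<^sub>R x) = r *\<^sub>R inv T x" by (metis inv_left inv_right T.scale)
  qed (simp add: norm_inv)
  show "selfadjoint (inv T)"
    unfolding selfadjoint_def
  proof (intro allI)
    fix x y
    have "inner (inv T x) y = inner (inv T x) (T (inv T y))" by (simp add: inv_right)
    also have "\<dots> = inner (T (inv T x)) (inv T y)" using T(2) by (simp add: selfadjoint_def)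
    finally show "inner (inv T x) y = inner x (inv T y)" by (simp add: inv_right)
  qed
qed

section \<open>Square roots by the binomial series\<close>

text \<open>\<open>sqrt_coeff n\<close> is the \<open>n\<close>-th Taylor coefficient of \<open>1 - sqrt (1 - t)\<close>: the recursion
  says that \<open>f = (\<Sum>n. sqrt_coeff n * t ^ n)\<close> satisfies \<open>2 f - f\<^sup>2 = t\<close>.\<close>

fun sqrt_coeff :: "nat \<Rightarrow> real" where
  "sqrt_coeff 0 = 0"
| "sqrt_coeff (Suc 0) = 1/2"
| "sqrt_coeff (Suc (Suc n)) =
     (\<Sum>i\<in>{1..Suc n}. sqrt_coeff i * sqrt_coeff (Suc (Suc n) - i)) / 2"

lemma sqrt_coeff_nonneg: "0 \<le> sqrt_coeff n"
proof (induction n rule: sqrt_coeff.induct)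
  case (3 n)
  have "0 \<le> (\<Sum>i\<in>{1..Suc n}. sqrt_coeff i * sqrt_coeff (Suc (Suc n) - i))"
    using 3 by (intro sum_nonneg mult_nonneg_nonneg) auto
  thus ?case by (simp del: sum.cl_ivl_Suc)
qed simp_all

lemma sqrt_coeff_convolution:
  "(\<Sum>i\<le>k. sqrt_coeff i * sqrt_coeff (k - i)) = 2 * sqrt_coeff k - (if k = 1 then 1 else 0)"
proof (cases k rule: sqrt_coeff.cases)
  case (3 n)
  have "{..Suc (Suc n)} = insert 0 (insert (Suc (Suc n)) {1..Suc n})" by auto
  thus ?thesis using 3 by simp
qed simp_all

lemma sum_triangle_rows:
  fixes F :: "nat \<Rightarrow> nat \<Rightarrow> 'a::comm_monoid_add"
  shows "(\<Sum>k<n. \<Sum>i\<le>k. F i (k - i)) = (\<Sum>i<n. \<Sum>j<n - i. F i j)"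
proof -
  have "{(i, j). i + j < n} = Sigma {..<n} (\<lambda>i. {..<n - i})" by auto
  thus ?thesis by (simp add: sum.triangle_reindex[symmetric] sum.Sigma)
qed

text \<open>With \<open>s N = (\<Sum>i<N. sqrt_coeff i)\<close>, the convolution identity gives
  \<open>2 s (N + 1) - 1 \<le> s (N + 1) * s N\<close>, so \<open>s N \<le> 1\<close> propagates to \<open>s (N + 1) \<le> 1\<close>.\<close>

lemma sqrt_coeff_partial_sum_le: "(\<Sum>i<N. sqrt_coeff i) \<le> 1"
proof (induction N)
  case (Suc N)
  let ?s = "\<lambda>n. \<Sum>i<n. sqrt_coeff i"
  have "(\<Sum>k<Suc N. if k = 1 then 1 else 0) \<le> (1::real)" by (simp add: sum.delta)
  hence "2 * ?s (Suc N) - 1 \<le> (\<Sum>k<Suc N. \<Sum>i\<le>k. sqrt_coeff i * sqrt_coeff (k - i))"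
    by (simp add: sqrt_coeff_convolution sum_subtractf sum_distrib_left)
  also have "\<dots> = (\<Sum>i<Suc N. sqrt_coeff i * ?s (Suc N - i))"
    by (simp add: sum_triangle_rows[of "\<lambda>i j. sqrt_coeff i * sqrt_coeff j"] sum_distrib_left)
  also have "\<dots> \<le> (\<Sum>i<Suc N. sqrt_coeff i * ?s N)"
  proof (rule sum_mono)
    fix i
    show "sqrt_coeff i * ?s (Suc N - i) \<le> sqrt_coeff i * ?s N"
      by (cases i) (auto intro!: mult_left_mono sum_mono2 sqrt_coeff_nonneg)
  qed
  also have "\<dots> = ?s (Suc N) * ?s N" by (rule sum_distrib_right[symmetric])
  finally have bound: "?s (Suc N) * (2 - ?s N) \<le> 1" by (simp add: algebra_simps)
  have "0 \<le> ?s (Suc N)" by (intro sum_nonneg) (simp add: sqrt_coeff_nonneg)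
  hence "?s (Suc N) * 1 \<le> ?s (Suc N) * (2 - ?s N)" using Suc.IH by (intro mult_left_mono) auto
  with bound show ?case by linarith
qed simp

lemma summable_sqrt_coeff: "summable sqrt_coeff"
  by (rule summableI_nonneg_bounded[where x=1]) (auto simp: sqrt_coeff_nonneg sqrt_coeff_partial_sum_le)

text \<open>The library states the next two facts for the class \<open>banach\<close>; a type variable of sort
  \<open>{real_normed_vector, complete_space}\<close>, as used for Hilbert spaces here, is not of that class.\<close>

lemma summable_norm_cancel_complete:
  fixes f :: "nat \<Rightarrow> 'a::{real_normed_vector,complete_space}"
  assumes "summable (\<lambda>n. norm (f n))"
  shows "summable f"
proof -
  have "\<exists>M. \<forall>m\<ge>M. \<forall>n\<ge>M. norm (sum f {..<m} - sum f {..<n}) < e" if "0 < e" for e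
  proof -
    obtain N where N: "\<And>m n. m \<ge> N \<Longrightarrow> norm (\<Sum>i\<in>{m..<n}. norm (f i)) < e"
      using assms \<open>0 < e\<close> unfolding summable_Cauchy by blast
    have close: "norm (sum f {..<m} - sum f {..<n}) < e" if "N \<le> n" "n \<le> m" for m n
    proof -
      have "sum f {..<m} - sum f {..<n} = sum f {n..<m}"
        using that by (metis sum_diff_nat_ivl lessThan_atLeast0 zero_le)
      hence "norm (sum f {..<m} - sum f {..<n}) \<le> (\<Sum>i\<in>{n..<m}. norm (f i))"
        by (simp add: norm_sum)
      also have "\<dots> < e" using N[of n m] that by simp
      finally show ?thesis .
    qed
    have "norm (sum f {..<m} - sum f {..<n}) < e" if "N \<le> m" "N \<le> n" for m n
      using close[of n m] close[of m n] that by (cases "n \<le> m") (auto simp: norm_minus_commute)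
    thus ?thesis by blast
  qed
  hence "Cauchy (\<lambda>n. sum f {..<n})" by (rule CauchyI)
  thus ?thesis by (simp add: summable_iff_convergent Cauchy_convergent)
qed

lemma norm_suminf_le_complete:
  fixes f :: "nat \<Rightarrow> 'a::{real_normed_vector,complete_space}"
  assumes "summable (\<lambda>n. norm (f n))"
  shows "norm (suminf f) \<le> (\<Sum>n. norm (f n))"
proof (rule LIMSEQ_le)
  show "(\<lambda>n. norm (\<Sum>i<n. f i)) \<longlonglongrightarrow> norm (suminf f)"
    using summable_LIMSEQ[OF summable_norm_cancel_complete[OF assms]] by (rule tendsto_norm)
  show "(\<lambda>n. \<Sum>i<n. norm (f i)) \<longlonglongrightarrow> (\<Sum>n. norm (f n))" using assms by (rule summable_LIMSEQ)
qed (auto intro: norm_sum)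

lemma norm_suminf_tail_le:
  fixes v :: "nat \<Rightarrow> 'a::{real_normed_vector,complete_space}"
  assumes "summable (\<lambda>j. norm (v j))"
  shows "norm (suminf v - (\<Sum>j<m. v j)) \<le> (\<Sum>j. norm (v j)) - (\<Sum>j<m. norm (v j))"
proof -
  have "suminf v - (\<Sum>j<m. v j) = (\<Sum>j. v (j + m))"
    using suminf_minus_initial_segment[OF summable_norm_cancel_complete[OF assms]] by simp
  also have "norm \<dots> \<le> (\<Sum>j. norm (v (j + m)))"
    using assms summable_iff_shift[of "\<lambda>j. norm (v j)" m] by (intro norm_suminf_le_complete) simp
  also have "\<dots> = (\<Sum>j. norm (v j)) - (\<Sum>j<m. norm (v j))"
    using assms by (rule suminf_minus_initial_segment)
  finally show ?thesis .
qed

lemma Cauchy_product_partial_sum_error: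
  fixes fs :: "nat \<Rightarrow> 'a::{real_normed_vector,complete_space} \<Rightarrow> 'b::real_normed_vector"
  assumes linear: "\<And>i. bounded_linear (fs i)"
    and bound: "\<And>i w. norm (fs i w) \<le> \<alpha> i * norm w" and \<alpha>: "\<And>i. 0 \<le> \<alpha> i"
    and v: "summable (\<lambda>j. norm (v j))"
  shows "norm ((\<Sum>k<n. \<Sum>i\<le>k. fs i (v (k - i))) - (\<Sum>i<n. fs i (suminf v)))
    \<le> (\<Sum>i<n. \<alpha> i) * (\<Sum>j. norm (v j)) - (\<Sum>k<n. \<Sum>i\<le>k. \<alpha> i * norm (v (k - i)))"
proof -
  define V B where "V = suminf v" and "B = (\<Sum>j. norm (v j))"
  note linear_fs = bounded_linear.linear[OF linear]
  have "(\<Sum>k<n. \<Sum>i\<le>k. fs i (v (k - i))) = (\<Sum>i<n. \<Sum>j<n - i. fs i (v j))"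
    by (rule sum_triangle_rows)
  also have "\<dots> = (\<Sum>i<n. fs i (\<Sum>j<n - i. v j))"
    by (intro sum.cong refl linear_sum[OF linear_fs, symmetric])
  finally have "(\<Sum>k<n. \<Sum>i\<le>k. fs i (v (k - i))) - (\<Sum>i<n. fs i V)
      = (\<Sum>i<n. fs i ((\<Sum>j<n - i. v j) - V))"
    by (simp add: sum_subtractf linear_diff[OF linear_fs])
  also have "norm \<dots> \<le> (\<Sum>i<n. norm (fs i ((\<Sum>j<n - i. v j) - V)))" by (rule norm_sum)
  also have "\<dots> \<le> (\<Sum>i<n. \<alpha> i * (B - (\<Sum>j<n - i. norm (v j))))"
  proof (rule sum_mono)
    fix i
    have "norm ((\<Sum>j<n - i. v j) - V) \<le> B - (\<Sum>j<n - i. norm (v j))"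
      using norm_suminf_tail_le[OF v, of "n - i"] by (simp add: V_def B_def norm_minus_commute)
    hence "\<alpha> i * norm ((\<Sum>j<n - i. v j) - V) \<le> \<alpha> i * (B - (\<Sum>j<n - i. norm (v j)))"
      using \<alpha> by (rule mult_left_mono)
    thus "norm (fs i ((\<Sum>j<n - i. v j) - V)) \<le> \<alpha> i * (B - (\<Sum>j<n - i. norm (v j)))"
      using bound[of i] by (rule order_trans[rotated])
  qed
  also have "\<dots> = (\<Sum>i<n. \<alpha> i) * B - (\<Sum>k<n. \<Sum>i\<le>k. \<alpha> i * norm (v (k - i)))"
  proof -
    have "(\<Sum>k<n. \<Sum>i\<le>k. \<alpha> i * norm (v (k - i))) = (\<Sum>i<n. \<Sum>j<n - i. \<alpha> i * norm (v j))"
      by (rule sum_triangle_rows)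
    also have "\<dots> = (\<Sum>i<n. \<alpha> i * (\<Sum>j<n - i. norm (v j)))" by (simp add: sum_distrib_left)
    finally show ?thesis by (simp add: right_diff_distrib sum_subtractf sum_distrib_right)
  qed
  finally show ?thesis by (simp add: V_def B_def)
qed

lemma Cauchy_product_sums_bounded_linear:
  fixes fs :: "nat \<Rightarrow> 'a::{real_normed_vector,complete_space} \<Rightarrow> 'b::{real_normed_vector,complete_space}"
  assumes linear: "\<And>i. bounded_linear (fs i)"
    and bound: "\<And>i w. norm (fs i w) \<le> \<alpha> i * norm w"
    and \<alpha>: "\<And>i. 0 \<le> \<alpha> i" "summable \<alpha>"
    and v: "summable (\<lambda>j. norm (v j))"
  shows "(\<lambda>k. \<Sum>i\<le>k. fs i (v (k - i))) sums (\<Sum>i. fs i (suminf v))"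
proof -
  define V B where "V = suminf v" and "B = (\<Sum>j. norm (v j))"
  have "(\<lambda>n. (\<Sum>i<n. \<alpha> i) * B) \<longlonglongrightarrow> suminf \<alpha> * B"
    using \<alpha>(2) by (intro tendsto_mult tendsto_const) (simp add: summable_LIMSEQ)
  moreover have "(\<lambda>k. \<Sum>i\<le>k. \<alpha> i * norm (v (k - i))) sums (suminf \<alpha> * B)"
    unfolding B_def using \<alpha> v by (intro Cauchy_product_sums) simp_all
  ultimately have "(\<lambda>n. (\<Sum>i<n. \<alpha> i) * B - (\<Sum>k<n. \<Sum>i\<le>k. \<alpha> i * norm (v (k - i))))
      \<longlonglongrightarrow> suminf \<alpha> * B - suminf \<alpha> * B"
    unfolding sums_def by (rule tendsto_diff)
  hence "(\<lambda>n. (\<Sum>i<n. \<alpha> i) * B - (\<Sum>k<n. \<Sum>i\<le>k. \<alpha> i * norm (v (k - i)))) \<longlonglongrightarrow> 0"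
    by simp
  hence "(\<lambda>n. (\<Sum>k<n. \<Sum>i\<le>k. fs i (v (k - i))) - (\<Sum>i<n. fs i V)) \<longlonglongrightarrow> 0"
    by (rule Lim_null_comparison[rotated])
      (simp add: V_def B_def Cauchy_product_partial_sum_error[OF linear bound \<alpha>(1) v])
  moreover have "(\<lambda>n. \<Sum>i<n. fs i V) \<longlonglongrightarrow> (\<Sum>i. fs i V)"
  proof (rule summable_LIMSEQ, rule summable_norm_cancel_complete)
    show "summable (\<lambda>i. norm (fs i V))"
      by (rule summable_comparison_test[OF _ summable_mult2[OF \<alpha>(2), of "norm V"]])
        (simp add: bound)
  qed
  ultimately have "(\<lambda>n. ((\<Sum>k<n. \<Sum>i\<le>k. fs i (v (k - i))) - (\<Sum>i<n. fs i V)) + (\<Sum>i<n. fs i V))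
      \<longlonglongrightarrow> 0 + (\<Sum>i. fs i V)"
    by (rule tendsto_add)
  thus ?thesis by (simp add: sums_def V_def)
qed

definition nonexpansive :: "('a::real_normed_vector \<Rightarrow> 'a) \<Rightarrow> bool" where
  "nonexpansive q \<longleftrightarrow> bounded_linear q \<and> (\<forall>x. norm (q x) \<le> norm x)"

definition sqrt_series :: "('a::real_normed_vector \<Rightarrow> 'a) \<Rightarrow> 'a \<Rightarrow> 'a" where
  "sqrt_series q x = (\<Sum>n. sqrt_coeff n *\<^sub>R (q ^^ n) x)"

definition sqrt_id_minus :: "('a::real_normed_vector \<Rightarrow> 'a) \<Rightarrow> 'a \<Rightarrow> 'a" where
  "sqrt_id_minus q x = x - sqrt_series q x"

lemma bounded_linear_funpow:
  fixes q :: "'a::real_normed_vector \<Rightarrow> 'a"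
  assumes "bounded_linear q"
  shows "bounded_linear (q ^^ n)"
proof (induction n)
  case 0 show ?case using bounded_linear_ident by (simp add: id_def)
next
  case (Suc n) show ?case using bounded_linear_compose[OF assms Suc.IH] by (simp add: o_def)
qed

context
  fixes q :: "'a::{real_normed_vector,complete_space} \<Rightarrow> 'a"
  assumes q: "nonexpansive q"
begin

lemma bounded_linear_funpow_nonexpansive: "bounded_linear (q ^^ n)"
  using q by (simp add: nonexpansive_def bounded_linear_funpow)

lemma norm_funpow_nonexpansive_le: "norm ((q ^^ n) x) \<le> norm x"
proof (induction n)
  case (Suc n)
  have "norm (q ((q ^^ n) x)) \<le> norm ((q ^^ n) x)" using q by (simp add: nonexpansive_def)
  thus ?case using Suc.IH by simp
qed simp

lemma norm_sqrt_series_term_le: "norm (sqrt_coeff n *\<^sub>R (q ^^ n) x) \<le> sqrt_coeff n * norm x"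
  using mult_left_mono[OF norm_funpow_nonexpansive_le sqrt_coeff_nonneg] sqrt_coeff_nonneg
  by simp

lemma summable_norm_sqrt_series: "summable (\<lambda>n. norm (sqrt_coeff n *\<^sub>R (q ^^ n) x))"
  by (rule summable_comparison_test[OF _ summable_mult2[OF summable_sqrt_coeff, of "norm x"]])
    (use norm_sqrt_series_term_le in simp)

lemma sqrt_series_sums: "(\<lambda>n. sqrt_coeff n *\<^sub>R (q ^^ n) x) sums sqrt_series q x"
  unfolding sqrt_series_def
  by (rule summable_sums[OF summable_norm_cancel_complete[OF summable_norm_sqrt_series]])

lemma norm_sqrt_series_le: "norm (sqrt_series q x) \<le> norm x"
proof -
  have "norm (\<Sum>i<n. sqrt_coeff i *\<^sub>R (q ^^ i) x) \<le> norm x" for n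
  proof -
    have "norm (\<Sum>i<n. sqrt_coeff i *\<^sub>R (q ^^ i) x) \<le> (\<Sum>i<n. sqrt_coeff i * norm x)"
      by (rule order_trans[OF norm_sum sum_mono]) (rule norm_sqrt_series_term_le)
    also have "\<dots> = (\<Sum>i<n. sqrt_coeff i) * norm x" by (simp add: sum_distrib_right)
    also have "\<dots> \<le> 1 * norm x" by (intro mult_right_mono sqrt_coeff_partial_sum_le) auto
    finally show ?thesis by simp
  qed
  moreover have "(\<lambda>n. norm (\<Sum>i<n. sqrt_coeff i *\<^sub>R (q ^^ i) x)) \<longlonglongrightarrow> norm (sqrt_series q x)"
    using sqrt_series_sums by (simp add: sums_def tendsto_norm)
  ultimately show ?thesis by (intro LIMSEQ_le_const2) auto
qed

lemma bounded_linear_sqrt_series: "bounded_linear (sqrt_series q)"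
proof (rule bounded_linear_intro[where K=1])
  note linear_q = bounded_linear.linear[OF bounded_linear_funpow_nonexpansive]
  fix x y
  have "(\<lambda>n. sqrt_coeff n *\<^sub>R (q ^^ n) x + sqrt_coeff n *\<^sub>R (q ^^ n) y)
      sums (sqrt_series q x + sqrt_series q y)"
    by (intro sums_add sqrt_series_sums)
  moreover have "(\<lambda>n. sqrt_coeff n *\<^sub>R (q ^^ n) x + sqrt_coeff n *\<^sub>R (q ^^ n) y)
      = (\<lambda>n. sqrt_coeff n *\<^sub>R (q ^^ n) (x + y))"
    by (simp add: linear_add[OF linear_q] scaleR_add_right)
  ultimately show "sqrt_series q (x + y) = sqrt_series q x + sqrt_series q y"
    using sqrt_series_sums[of "x + y"] sums_unique2 by metis
next
  note linear_q = bounded_linear.linear[OF bounded_linear_funpow_nonexpansive]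
  fix r x
  have "(\<lambda>n. r *\<^sub>R (sqrt_coeff n *\<^sub>R (q ^^ n) x)) sums (r *\<^sub>R sqrt_series q x)"
    by (intro sums_scaleR_right sqrt_series_sums)
  moreover have "(\<lambda>n. r *\<^sub>R (sqrt_coeff n *\<^sub>R (q ^^ n) x)) = (\<lambda>n. sqrt_coeff n *\<^sub>R (q ^^ n) (r *\<^sub>R x))"
    by (simp add: linear_scale[OF linear_q] mult.commute)
  ultimately show "sqrt_series q (r *\<^sub>R x) = r *\<^sub>R sqrt_series q x"
    using sqrt_series_sums[of "r *\<^sub>R x"] sums_unique2 by metis
qed (simp add: norm_sqrt_series_le)

lemma sqrt_series_square: "sqrt_series q (sqrt_series q x) = 2 *\<^sub>R sqrt_series q x - q x"
proof -
  note linear_q = bounded_linear.linear[OF bounded_linear_funpow_nonexpansive]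
  have "(\<lambda>k. \<Sum>i\<le>k. sqrt_coeff i *\<^sub>R (q ^^ i) (sqrt_coeff (k - i) *\<^sub>R (q ^^ (k - i)) x))
      sums (\<Sum>i. sqrt_coeff i *\<^sub>R (q ^^ i) (\<Sum>j. sqrt_coeff j *\<^sub>R (q ^^ j) x))"
  proof (rule Cauchy_product_sums_bounded_linear[where \<alpha>=sqrt_coeff])
    show "bounded_linear (\<lambda>w. sqrt_coeff i *\<^sub>R (q ^^ i) w)" for i
      by (rule bounded_linear_compose[OF bounded_linear_scaleR_right bounded_linear_funpow_nonexpansive])
  qed (fact norm_sqrt_series_term_le sqrt_coeff_nonneg summable_sqrt_coeff summable_norm_sqrt_series)+
  moreover have "sqrt_coeff i *\<^sub>R (q ^^ i) (sqrt_coeff (k - i) *\<^sub>R (q ^^ (k - i)) x)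
      = (sqrt_coeff i * sqrt_coeff (k - i)) *\<^sub>R (q ^^ k) x" if "i \<le> k" for i k
  proof -
    have "(q ^^ i) ((q ^^ (k - i)) x) = (q ^^ k) x"
      using that by (metis funpow_add o_apply le_add_diff_inverse)
    thus ?thesis by (simp add: linear_scale[OF linear_q])
  qed
  ultimately have "(\<lambda>k. (2 * sqrt_coeff k - (if k = 1 then 1 else 0)) *\<^sub>R (q ^^ k) x)
      sums sqrt_series q (sqrt_series q x)"
    by (simp add: sqrt_series_def scaleR_sum_left[symmetric] sqrt_coeff_convolution)
  moreover have "(\<lambda>k. (2 * sqrt_coeff k - (if k = 1 then 1 else 0)) *\<^sub>R (q ^^ k) x)
      sums (2 *\<^sub>R sqrt_series q x - q x)"
  proof -
    have "(\<lambda>k. 2 *\<^sub>R (sqrt_coeff k *\<^sub>R (q ^^ k) x) - (if k = 1 then (q ^^ k) x else 0))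
        sums (2 *\<^sub>R sqrt_series q x - (q ^^ 1) x)"
      by (intro sums_diff sums_scaleR_right sqrt_series_sums sums_single)
    moreover have "(\<lambda>k. 2 *\<^sub>R (sqrt_coeff k *\<^sub>R (q ^^ k) x) - (if k = 1 then (q ^^ k) x else 0))
        = (\<lambda>k. (2 * sqrt_coeff k - (if k = 1 then 1 else 0)) *\<^sub>R (q ^^ k) x)"
      by (auto simp: algebra_simps)
    ultimately show ?thesis by simp
  qed
  ultimately show ?thesis by (rule sums_unique2)
qed

lemma bounded_linear_sqrt_id_minus: "bounded_linear (sqrt_id_minus q)"
  unfolding sqrt_id_minus_def[abs_def]
  by (intro bounded_linear_sub bounded_linear_ident bounded_linear_sqrt_series)

lemma sqrt_id_minus_square: "sqrt_id_minus q (sqrt_id_minus q x) = x - q x"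
proof -
  interpret bounded_linear "sqrt_series q" by (rule bounded_linear_sqrt_series)
  show ?thesis by (simp add: sqrt_id_minus_def diff sqrt_series_square algebra_simps scaleR_2)
qed

end

lemma sqrt_id_minus_commute:
  fixes q1 :: "'b::{real_normed_vector,complete_space} \<Rightarrow> 'b"
    and q2 :: "'a::{real_normed_vector,complete_space} \<Rightarrow> 'a" and X :: "'a \<Rightarrow> 'b"
  assumes "nonexpansive q1" "nonexpansive q2" "bounded_linear X"
    and commute: "\<And>x. X (q2 x) = q1 (X x)"
  shows "X (sqrt_id_minus q2 x) = sqrt_id_minus q1 (X x)"
proof -
  interpret X: bounded_linear X by fact
  have "X ((q2 ^^ n) y) = (q1 ^^ n) (X y)" for n y
    by (induction n) (auto simp: commute)
  hence "(\<lambda>n. sqrt_coeff n *\<^sub>R (q1 ^^ n) (X x)) sums X (sqrt_series q2 x)"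
    using X.sums[OF sqrt_series_sums[OF assms(2)]] by (simp add: X.scale)
  hence "X (sqrt_series q2 x) = sqrt_series q1 (X x)"
    using sqrt_series_sums[OF assms(1)] sums_unique2 by metis
  thus ?thesis by (simp add: sqrt_id_minus_def X.diff)
qed

lemma selfadjoint_sqrt_id_minus:
  fixes q :: "'a::{real_inner,complete_space} \<Rightarrow> 'a"
  assumes q: "nonexpansive q" "selfadjoint q"
  shows "selfadjoint (sqrt_id_minus q)"
proof -
  have power: "inner ((q ^^ n) x) y = inner x ((q ^^ n) y)" for n x y
    using q(2) by (induction n arbitrary: x y) (auto simp: selfadjoint_def funpow_swap1)
  have "inner (sqrt_series q x) y = inner x (sqrt_series q y)" for x y
  proof -
    have "(\<lambda>n. inner (sqrt_coeff n *\<^sub>R (q ^^ n) x) y) sums inner (sqrt_series q x) y"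
      by (intro bounded_linear.sums[OF bounded_linear_inner_left] sqrt_series_sums[OF q(1)])
    moreover have "(\<lambda>n. inner x (sqrt_coeff n *\<^sub>R (q ^^ n) y)) sums inner x (sqrt_series q y)"
      by (intro bounded_linear.sums[OF bounded_linear_inner_right] sqrt_series_sums[OF q(1)])
    ultimately show ?thesis by (simp add: power sums_unique2)
  qed
  thus ?thesis by (simp add: selfadjoint_def sqrt_id_minus_def inner_diff_left inner_diff_right)
qed

lemma nonneg_sqrt_id_minus:
  fixes q :: "'a::{real_inner,complete_space} \<Rightarrow> 'a"
  assumes "nonexpansive q"
  shows "nonneg_op (sqrt_id_minus q)"
  unfolding nonneg_op_def
proof
  fix x
  have "inner (sqrt_series q x) x \<le> norm (sqrt_series q x) * norm x" by (rule norm_cauchy_schwarz)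
  also have "\<dots> \<le> norm x * norm x" using norm_sqrt_series_le[OF assms] by (simp add: mult_right_mono)
  also have "\<dots> = inner x x" by (simp add: power2_norm_eq_inner[symmetric] power2_eq_square)
  finally show "0 \<le> inner (sqrt_id_minus q x) x" by (simp add: sqrt_id_minus_def inner_diff_left)
qed

lemma nonneg_op_inner_eq_0:
  fixes P :: "'a::real_inner \<Rightarrow> 'a"
  assumes "bounded_linear P" "selfadjoint P" "nonneg_op P" and "inner (P y) y = 0"
  shows "P y = 0"
proof -
  interpret P: bounded_linear P by fact
  have "2 * t * inner (P y) (P y) \<le> t * t * inner (P (P y)) (P y)" for t
  proof -
    have "0 \<le> inner (P (y - t *\<^sub>R P y)) (y - t *\<^sub>R P y)"
      using assms(3) by (simp add: nonneg_op_def)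
    also have "\<dots> = inner (P y) y - t * inner (P y) (P y) - t * inner (P (P y)) y
        + t * t * inner (P (P y)) (P y)"
      by (simp add: P.diff P.scale inner_diff_left inner_diff_right algebra_simps)
    also have "inner (P (P y)) y = inner (P y) (P y)" using assms(2) by (simp add: selfadjoint_def)
    finally show ?thesis using assms(4) by simp
  qed
  hence "inner (P y) (P y) = 0"
    by (rule linear_coeff_zero_of_quadratic_bound) (use assms(3) in \<open>simp add: nonneg_op_def\<close>)
  thus ?thesis by simp
qed

text \<open>A nonnegative square root \<open>t\<close> of \<open>I - q\<close> commutes with \<open>q\<close>, hence with
  \<open>s = sqrt_id_minus q\<close>; then \<open>d = s - t\<close> satisfies \<open>(s + t) d = s\<^sup>2 - t\<^sup>2 = 0\<close>, which forces
  \<open>s (d x) = t (d x) = 0\<close> by positivity, and so \<open>d\<^sup>2 = 0\<close>.\<close>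

lemma sqrt_id_minus_unique:
  fixes q :: "'a::{real_inner,complete_space} \<Rightarrow> 'a"
  assumes q: "nonexpansive q" "selfadjoint q"
    and t: "bounded_linear t" "selfadjoint t" "nonneg_op t"
    and square: "\<And>x. t (t x) = x - q x"
  shows "t = sqrt_id_minus q"
proof -
  interpret t: bounded_linear t by (rule t(1))
  interpret s: bounded_linear "sqrt_id_minus q" by (rule bounded_linear_sqrt_id_minus[OF q(1)])
  let ?s = "sqrt_id_minus q"
  have s: "bounded_linear ?s" "selfadjoint ?s" "nonneg_op ?s"
    using bounded_linear_sqrt_id_minus selfadjoint_sqrt_id_minus nonneg_sqrt_id_minus q by auto
  have "t (q x) = q (t x)" for x
    using square[of "t x"] by (simp add: square t.diff)
  hence ts: "t (?s x) = ?s (t x)" for x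
    using sqrt_id_minus_commute[OF q(1) q(1) t(1)] by blast
  define d where "d x = ?s x - t x" for x
  have "d (d x) = 0" for x
  proof -
    have "?s (d x) + t (d x) = 0"
      unfolding d_def by (simp add: s.diff t.diff sqrt_id_minus_square[OF q(1)] square ts)
    hence "inner (?s (d x)) (d x) + inner (t (d x)) (d x) = 0" by (metis inner_add_left inner_zero_left)
    moreover have "0 \<le> inner (?s (d x)) (d x)" "0 \<le> inner (t (d x)) (d x)"
      using s(3) t(3) by (simp_all add: nonneg_op_def)
    ultimately have "?s (d x) = 0" "t (d x) = 0"
      using nonneg_op_inner_eq_0[OF s] nonneg_op_inner_eq_0[OF t] by force+
    thus ?thesis by (simp add: d_def)
  qed
  moreover have "inner (d x) (d x) = inner (d (d x)) x" for x
    using s(2) t(2) by (simp add: d_def selfadjoint_def inner_diff_left inner_diff_right)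
  ultimately show ?thesis by (auto simp: d_def)
qed

lemma op_sqrt_fgraph:
  fixes q :: "'a::{real_inner,complete_space} \<Rightarrow> 'a"
  assumes "nonexpansive q" "selfadjoint q"
  shows "op_sqrt (fgraph (\<lambda>x. x - q x)) = fgraph (sqrt_id_minus q)"
  unfolding op_sqrt_def
proof (rule the_equality)
  show "\<exists>s. bounded_linear s \<and> fgraph (sqrt_id_minus q) = fgraph s \<and>
      (\<forall>x y. inner (s x) y = inner x (s y)) \<and> (\<forall>x. 0 \<le> inner (s x) x) \<and>
      op_comp (fgraph (sqrt_id_minus q)) (fgraph (sqrt_id_minus q)) = fgraph (\<lambda>x. x - q x)"
    using bounded_linear_sqrt_id_minus[OF assms(1)] selfadjoint_sqrt_id_minus[OF assms]
      nonneg_sqrt_id_minus[OF assms(1)] sqrt_id_minus_square[OF assms(1)]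
    by (intro exI[of _ "sqrt_id_minus q"]) (simp add: selfadjoint_def nonneg_op_def op_comp_fgraph)
next
  fix S assume "\<exists>s. bounded_linear s \<and> S = fgraph s \<and> (\<forall>x y. inner (s x) y = inner x (s y)) \<and>
      (\<forall>x. 0 \<le> inner (s x) x) \<and> op_comp S S = fgraph (\<lambda>x. x - q x)"
  then obtain s where s: "bounded_linear s" "S = fgraph s" "selfadjoint s" "nonneg_op s"
      "fgraph (\<lambda>x. s (s x)) = fgraph (\<lambda>x. x - q x)"
    by (auto simp: selfadjoint_def nonneg_op_def op_comp_fgraph)
  have "\<And>x. s (s x) = x - q x" using fgraph_inject[OF s(5)] by metis
  thus "S = fgraph (sqrt_id_minus q)" using sqrt_id_minus_unique[OF assms s(1,3,4)] s(2) by simp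
qed

section \<open>Extension and factorization of contractions\<close>

lemma contraction_extends_to_closure:
  fixes f :: "'a::real_normed_vector \<Rightarrow> 'b::{real_normed_vector,complete_space}"
  assumes V: "subspace V"
    and f_linear: "\<And>a u v. u \<in> V \<Longrightarrow> v \<in> V \<Longrightarrow> f (a *\<^sub>R u + v) = a *\<^sub>R f u + f v"
    and f_norm: "\<And>u. u \<in> V \<Longrightarrow> norm (f u) \<le> norm u"
  obtains g where "\<And>u. u \<in> V \<Longrightarrow> g u = f u"
    and "\<And>a u v. u \<in> closure V \<Longrightarrow> v \<in> closure V \<Longrightarrow> g (a *\<^sub>R u + v) = a *\<^sub>R g u + g v"
    and "\<And>u. u \<in> closure V \<Longrightarrow> norm (g u) \<le> norm u"
proof -
  have f_diff: "f u - f v = f (u - v)" if "u \<in> V" "v \<in> V" for u v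
    using f_linear[of v "u - v" 1] V that by (simp add: subspace_diff)
  have "uniformly_continuous_on V f"
    unfolding uniformly_continuous_on_def dist_norm
    by (metis f_diff f_norm V subspace_diff le_less_trans)
  then obtain g where g: "continuous_on (closure V) g" "\<And>u. u \<in> V \<Longrightarrow> f u = g u"
    using uniformly_continuous_on_extension_on_closure uniformly_continuous_imp_continuous by metis
  have limit: "(\<lambda>n. g (us n)) \<longlonglongrightarrow> g u"
    if "\<forall>n. us n \<in> closure V" "u \<in> closure V" "us \<longlonglongrightarrow> u" for us u
    using g(1) that unfolding continuous_on_sequentially comp_def by blast
  have closure_V: "subspace (closure V)" by (rule subspace_closure[OF V])
  show ?thesis
  proof (rule that)
    show "g u = f u" if "u \<in> V" for u using g(2) that by simp
  next
    fix a u v assume uv: "u \<in> closure V" "v \<in> closure V"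
    obtain us vs where us: "\<forall>n. us n \<in> V" "us \<longlonglongrightarrow> u"
      and vs: "\<forall>n. vs n \<in> V" "vs \<longlonglongrightarrow> v"
      using uv unfolding closure_sequential by metis
    have "a *\<^sub>R us n + vs n \<in> V" for n using us(1) vs(1) V by (simp add: subspace_add subspace_scale)
    moreover have "a *\<^sub>R u + v \<in> closure V" using uv closure_V by (simp add: subspace_add subspace_scale)
    ultimately have "(\<lambda>n. g (a *\<^sub>R us n + vs n)) \<longlonglongrightarrow> g (a *\<^sub>R u + v)"
      using closure_subset us(2) vs(2) by (intro limit) (auto intro!: tendsto_intros)
    moreover have "(\<lambda>n. a *\<^sub>R g (us n) + g (vs n)) \<longlonglongrightarrow> a *\<^sub>R g u + g v"
      using us vs uv closure_subset by (intro tendsto_intros limit) auto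
    moreover have "g (a *\<^sub>R us n + vs n) = a *\<^sub>R g (us n) + g (vs n)" for n
      using us vs V g(2)[symmetric] f_linear by (simp add: subspace_add subspace_scale)
    ultimately show "g (a *\<^sub>R u + v) = a *\<^sub>R g u + g v" using LIMSEQ_unique by simp
  next
    fix u assume u: "u \<in> closure V"
    obtain us where us: "\<forall>n. us n \<in> V" "us \<longlonglongrightarrow> u"
      using u unfolding closure_sequential by metis
    have "(\<lambda>n. norm (g (us n))) \<longlonglongrightarrow> norm (g u)"
      using us u closure_subset by (intro tendsto_norm limit) auto
    moreover have "(\<lambda>n. norm (us n)) \<longlonglongrightarrow> norm u" using us by (intro tendsto_norm) auto
    ultimately show "norm (g u) \<le> norm u"
      using us g(2) f_norm by (intro LIMSEQ_le) auto
  qed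
qed

lemma contraction_extends_bounded_linear:
  fixes f :: "'a::{real_inner,complete_space} \<Rightarrow> 'b::{real_normed_vector,complete_space}"
  assumes V: "subspace V"
    and f_linear: "\<And>a u v. u \<in> V \<Longrightarrow> v \<in> V \<Longrightarrow> f (a *\<^sub>R u + v) = a *\<^sub>R f u + f v"
    and f_norm: "\<And>u. u \<in> V \<Longrightarrow> norm (f u) \<le> norm u"
  obtains h where "bounded_linear h" "\<And>u. u \<in> V \<Longrightarrow> h u = f u" "\<And>y. y \<in> V\<^sup>\<bottom> \<Longrightarrow> h y = 0"
proof -
  obtain e where e: "\<And>u. u \<in> V \<Longrightarrow> e u = f u"
    "\<And>a u v. u \<in> closure V \<Longrightarrow> v \<in> closure V \<Longrightarrow> e (a *\<^sub>R u + v) = a *\<^sub>R e u + e v"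
    "\<And>u. u \<in> closure V \<Longrightarrow> norm (e u) \<le> norm u"
    using contraction_extends_to_closure[OF V f_linear f_norm] by blast
  define P where "P = proj_onto (closure V)"
  have closure_V: "subspace (closure V)" "closed (closure V)" by (simp_all add: subspace_closure V)
  have P: "P y \<in> closure V" "norm (P y) \<le> norm y" for y
    unfolding P_def by (simp_all add: proj_onto_in[OF closure_V] norm_proj_onto_le[OF closure_V])
  interpret P: bounded_linear P unfolding P_def by (rule bounded_linear_proj_onto[OF closure_V])
  have e0: "e 0 = 0" using e(2)[of 0 0 1] subspace_0[OF closure_V(1)] by simp
  show ?thesis
  proof (rule that)
    show "bounded_linear (\<lambda>y. e (P y))"
    proof (rule bounded_linear_intro[where K=1])
      show "e (P (x + y)) = e (P x) + e (P y)" for x y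
        using e(2)[OF P(1) P(1), of 1 x y] by (simp add: P.add)
      show "e (P (r *\<^sub>R x)) = r *\<^sub>R e (P x)" for r x
        using e(2)[OF P(1) P(1), of r x 0] by (simp add: P.scale P.zero e0)
      show "norm (e (P x)) \<le> norm x * 1" for x using order_trans[OF e(3)[OF P(1)] P(2)] by simp
    qed
    show "e (P u) = f u" if "u \<in> V" for u
      using that closure_subset[of V] e(1) by (auto simp: P_def proj_onto_id[OF closure_V])
    show "e (P y) = 0" if "y \<in> V\<^sup>\<bottom>" for y
    proof -
      have "P y = 0"
        using that proj_onto_eq_0_iff[OF closure_V] by (simp add: P_def orthogonal_comp_closure)
      thus ?thesis using e0 by simp
    qed
  qed
qed

text \<open>A form of Douglas' factorization lemma: if \<open>\<parallel>f u\<parallel> \<le> \<parallel>g u\<parallel>\<close>, then \<open>g u \<mapsto> f u\<close> is a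
  well-defined contraction on \<open>range g\<close>.\<close>

lemma dominated_factorization:
  fixes f :: "'a::real_normed_vector \<Rightarrow> 'c::{real_normed_vector,complete_space}"
    and g :: "'a \<Rightarrow> 'b::{real_inner,complete_space}"
  assumes f: "linear f" and g: "linear g" and dominated: "\<And>u. norm (f u) \<le> norm (g u)"
  obtains h where "bounded_linear h" "\<And>u. h (g u) = f u" "\<And>y. y \<in> (range g)\<^sup>\<bottom> \<Longrightarrow> h y = 0"
proof -
  interpret f: linear f by (rule f)
  interpret g: linear g by (rule g)
  define f0 where "f0 y = f (inv g y)" for y
  have f0: "f0 (g u) = f u" for u
  proof -
    have "g (inv g (g u) - u) = 0" by (simp add: f_inv_into_f g.diff)
    hence "norm (f (inv g (g u) - u)) \<le> 0" using dominated by (metis norm_zero)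
    thus ?thesis by (simp add: f0_def f.diff)
  qed
  obtain h where "bounded_linear h" "\<And>y. y \<in> range g \<Longrightarrow> h y = f0 y"
    "\<And>y. y \<in> (range g)\<^sup>\<bottom> \<Longrightarrow> h y = 0"
  proof (rule contraction_extends_bounded_linear)
    show "subspace (range g)" by (simp add: g linear_subspace_image)
    show "f0 (a *\<^sub>R u + v) = a *\<^sub>R f0 u + f0 v" if "u \<in> range g" "v \<in> range g" for a u v
      using that f0 by (auto simp: g.add[symmetric] g.scale[symmetric] f.add f.scale)
    show "norm (f0 u) \<le> norm u" if "u \<in> range g" for u
      using that f0 dominated by auto
  qed blast
  thus ?thesis using that f0 by auto
qed

section \<open>The operators of the theorem\<close>

locale bounded_hilbert_op =
  fixes A :: "'a::{real_inner,complete_space} \<Rightarrow> 'b::{real_inner,complete_space}"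
  assumes bounded_linear_A: "bounded_linear A"
begin

text \<open>For the Moore--Penrose inverse \<open>B\<close> of \<open>A\<close> it turns out that
  \<open>(I + BB\<^sup>*)\<^sup>-\<^sup>1 = I - Q1\<close> and \<open>(I + B\<^sup>*B)\<^sup>-\<^sup>1 = I - Q2\<close>, so \<open>S1\<close> and \<open>S2\<close> are the square
  roots in the theorem.\<close>

definition "M1 = {x. A x = 0}\<^sup>\<bottom>"
definition "M2 = {y. adjoint A y = 0}\<^sup>\<bottom>"
definition "P1 = proj_onto M1"
definition "P2 = proj_onto M2"
definition "R1 = inv (\<lambda>x. x + adjoint A (A x))"
definition "R2 = inv (\<lambda>y. y + A (adjoint A y))"
definition "Q1 x = R1 (P1 x)"
definition "Q2 y = R2 (P2 y)"
definition "S1 = sqrt_id_minus Q1"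
definition "S2 = sqrt_id_minus Q2"

lemma bounded_linear_adjoint_A: "bounded_linear (adjoint A)"
  by (rule bounded_linear_adjoint[OF bounded_linear_A])

lemmas adjoint_A = adjoint_works_hilbert[OF bounded_linear_A] adjoint_works_hilbert'[OF bounded_linear_A]

lemma adjoint_adjoint_A: "adjoint (adjoint A) = A"
  by (rule adjoint_adjoint_hilbert[OF bounded_linear_A])

lemma kernel_A: "{x. A x = 0} = (range (adjoint A))\<^sup>\<bottom>"
  and kernel_adjoint_A: "{y. adjoint A y = 0} = (range A)\<^sup>\<bottom>"
  using adjoint_eq_0_iff[OF bounded_linear_adjoint_A] adjoint_eq_0_iff[OF bounded_linear_A]
  by (auto simp: adjoint_adjoint_A)

lemma M1: "subspace M1" "closed M1" and M2: "subspace M2" "closed M2"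
  by (simp_all add: M1_def M2_def subspace_orthogonal_comp closed_orthogonal_comp)

lemma orthogonal_comp_M1: "M1\<^sup>\<bottom> = {x. A x = 0}"
  and orthogonal_comp_M2: "M2\<^sup>\<bottom> = {y. adjoint A y = 0}"
  unfolding M1_def M2_def kernel_A kernel_adjoint_A
  by (simp_all add: orthogonal_comp_orthogonal_comp subspace_orthogonal_comp closed_orthogonal_comp)

lemma A_in_M2: "A x \<in> M2" and adjoint_A_in_M1: "adjoint A y \<in> M1"
  by (auto simp: M1_def M2_def orthogonal_comp_def orthogonal_def
      adjoint_A(1)[symmetric] adjoint_A(2)[symmetric])

lemma M1_eq_0: "x \<in> M1 \<Longrightarrow> A x = 0 \<Longrightarrow> x = 0"
  and M2_eq_0: "y \<in> M2 \<Longrightarrow> adjoint A y = 0 \<Longrightarrow> y = 0"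
  using orthogonal_Int_0[OF M1(1)] orthogonal_Int_0[OF M2(1)]
  by (auto simp: orthogonal_comp_M1 orthogonal_comp_M2)

lemma M1_A_inject: "x \<in> M1 \<Longrightarrow> x' \<in> M1 \<Longrightarrow> A x = A x' \<Longrightarrow> x = x'"
  using M1_eq_0[of "x - x'"] subspace_diff[OF M1(1)]
    linear_diff[OF bounded_linear.linear[OF bounded_linear_A]]
  by simp

lemma M2_adjoint_A_inject: "y \<in> M2 \<Longrightarrow> y' \<in> M2 \<Longrightarrow> adjoint A y = adjoint A y' \<Longrightarrow> y = y'"
  using M2_eq_0[of "y - y'"] subspace_diff[OF M2(1)]
    linear_diff[OF bounded_linear.linear[OF bounded_linear_adjoint_A]]
  by simp

lemma P1:
  shows bounded_linear_P1: "bounded_linear P1" and P1_in: "P1 x \<in> M1"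
    and P1_id: "x \<in> M1 \<Longrightarrow> P1 x = x" and P1_eq_0_iff: "P1 x = 0 \<longleftrightarrow> A x = 0"
    and A_P1: "A (P1 x) = A x" and selfadjoint_P1: "selfadjoint P1"
    and norm_P1_le: "norm (P1 x) \<le> norm x"
proof -
  show "bounded_linear P1" "P1 x \<in> M1" "x \<in> M1 \<Longrightarrow> P1 x = x" "norm (P1 x) \<le> norm x"
    "selfadjoint P1"
    unfolding P1_def selfadjoint_def
    by (simp_all add: bounded_linear_proj_onto proj_onto_in proj_onto_id norm_proj_onto_le
        proj_onto_selfadjoint M1)
  show "P1 x = 0 \<longleftrightarrow> A x = 0"
    unfolding P1_def proj_onto_eq_0_iff[OF M1] orthogonal_comp_M1 by simp
  have "x - P1 x \<in> M1\<^sup>\<bottom>" unfolding P1_def by (rule proj_onto_orthogonal[OF M1])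
  thus "A (P1 x) = A x"
    by (simp add: orthogonal_comp_M1 linear_diff[OF bounded_linear.linear[OF bounded_linear_A]])
qed

lemma P2:
  shows bounded_linear_P2: "bounded_linear P2" and P2_in: "P2 y \<in> M2"
    and P2_id: "y \<in> M2 \<Longrightarrow> P2 y = y" and P2_eq_0_iff: "P2 y = 0 \<longleftrightarrow> adjoint A y = 0"
    and adjoint_A_P2: "adjoint A (P2 y) = adjoint A y" and selfadjoint_P2: "selfadjoint P2"
    and norm_P2_le: "norm (P2 y) \<le> norm y"
proof -
  show "bounded_linear P2" "P2 y \<in> M2" "y \<in> M2 \<Longrightarrow> P2 y = y" "norm (P2 y) \<le> norm y"
    "selfadjoint P2"
    unfolding P2_def selfadjoint_def
    by (simp_all add: bounded_linear_proj_onto proj_onto_in proj_onto_id norm_proj_onto_le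
        proj_onto_selfadjoint M2)
  show "P2 y = 0 \<longleftrightarrow> adjoint A y = 0"
    unfolding P2_def proj_onto_eq_0_iff[OF M2] orthogonal_comp_M2 by simp
  have "y - P2 y \<in> M2\<^sup>\<bottom>" unfolding P2_def by (rule proj_onto_orthogonal[OF M2])
  thus "adjoint A (P2 y) = adjoint A y"
    by (simp add: orthogonal_comp_M2 linear_diff[OF bounded_linear.linear[OF bounded_linear_adjoint_A]])
qed

lemma P1_adjoint_A: "P1 (adjoint A y) = adjoint A y" and P2_A: "P2 (A x) = A x"
  by (simp_all add: P1_id P2_id adjoint_A_in_M1 A_in_M2)

lemma R1:
  shows bounded_linear_R1: "bounded_linear R1"
    and R1_right: "R1 y + adjoint A (A (R1 y)) = y" and R1_left: "R1 (x + adjoint A (A x)) = x"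
    and norm_R1_le: "norm (R1 y) \<le> norm y" and selfadjoint_R1: "selfadjoint R1"
proof -
  interpret bounded_linear A by (rule bounded_linear_A)
  have "bounded_linear (\<lambda>x. x + adjoint A (A x))"
    by (intro bounded_linear_add bounded_linear_ident
        bounded_linear_compose[OF bounded_linear_adjoint_A bounded_linear_A])
  moreover have "selfadjoint (\<lambda>x. x + adjoint A (A x))"
    by (simp add: selfadjoint_def inner_add_left inner_add_right adjoint_A)
  moreover have "inner x x \<le> inner (x + adjoint A (A x)) x" for x
    by (simp add: inner_add_left adjoint_A(2))
  ultimately show "bounded_linear R1" "R1 y + adjoint A (A (R1 y)) = y"
    "R1 (x + adjoint A (A x)) = x" "norm (R1 y) \<le> norm y" "selfadjoint R1"
    unfolding R1_def using coercive_selfadjoint_inverse by blast+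
qed

lemma R2:
  shows bounded_linear_R2: "bounded_linear R2"
    and R2_right: "R2 y + A (adjoint A (R2 y)) = y" and R2_left: "R2 (y + A (adjoint A y)) = y"
    and norm_R2_le: "norm (R2 y) \<le> norm y" and selfadjoint_R2: "selfadjoint R2"
proof -
  have "bounded_linear (\<lambda>y. y + A (adjoint A y))"
    by (intro bounded_linear_add bounded_linear_ident
        bounded_linear_compose[OF bounded_linear_A bounded_linear_adjoint_A])
  moreover have "selfadjoint (\<lambda>y. y + A (adjoint A y))"
    by (simp add: selfadjoint_def inner_add_left inner_add_right adjoint_A)
  moreover have "inner y y \<le> inner (y + A (adjoint A y)) y" for y
    by (simp add: inner_add_left adjoint_A(1))
  ultimately show "bounded_linear R2" "R2 y + A (adjoint A (R2 y)) = y"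
    "R2 (y + A (adjoint A y)) = y" "norm (R2 y) \<le> norm y" "selfadjoint R2"
    unfolding R2_def using coercive_selfadjoint_inverse by blast+
qed

lemma R1_P1: "R1 (P1 x) = P1 (R1 x)"
proof -
  interpret bounded_linear P1 by (rule bounded_linear_P1)
  have "P1 (R1 x) + adjoint A (A (P1 (R1 x))) = P1 x"
    using R1_right[of x] by (metis add A_P1 P1_adjoint_A)
  thus ?thesis by (metis R1_left)
qed

lemma R2_P2: "R2 (P2 y) = P2 (R2 y)"
proof -
  interpret bounded_linear P2 by (rule bounded_linear_P2)
  have "P2 (R2 y) + A (adjoint A (P2 (R2 y))) = P2 y"
    using R2_right[of y] by (metis add adjoint_A_P2 P2_A)
  thus ?thesis by (metis R2_left)
qed

lemma R1_adjoint_A: "R1 (adjoint A y) = adjoint A (R2 y)"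
proof -
  interpret bounded_linear "adjoint A" by (rule bounded_linear_adjoint_A)
  show ?thesis using R2_right[of y] by (metis add R1_left)
qed

lemma R2_A: "R2 (A x) = A (R1 x)"
proof -
  interpret bounded_linear A by (rule bounded_linear_A)
  show ?thesis using R1_right[of x] by (metis add R2_left)
qed

lemma R1_kernel: "A x = 0 \<Longrightarrow> R1 x = x"
  using R1_left[of x] linear_0[OF bounded_linear.linear[OF bounded_linear_adjoint_A]] by simp

lemma nonexpansive_Q1: "nonexpansive Q1"
  unfolding nonexpansive_def Q1_def[abs_def]
  using bounded_linear_compose[OF bounded_linear_R1 bounded_linear_P1]
    order_trans[OF norm_R1_le norm_P1_le] by simp

lemma nonexpansive_Q2: "nonexpansive Q2"
  unfolding nonexpansive_def Q2_def[abs_def]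
  using bounded_linear_compose[OF bounded_linear_R2 bounded_linear_P2]
    order_trans[OF norm_R2_le norm_P2_le] by simp

lemma selfadjoint_Q1: "selfadjoint Q1"
  using selfadjoint_R1 selfadjoint_P1 unfolding selfadjoint_def Q1_def by (simp add: R1_P1)

lemma selfadjoint_Q2: "selfadjoint Q2"
  using selfadjoint_R2 selfadjoint_P2 unfolding selfadjoint_def Q2_def by (simp add: R2_P2)

lemma P1_Q1: "P1 (Q1 x) = Q1 (P1 x)" and P2_Q2: "P2 (Q2 y) = Q2 (P2 y)"
  by (simp_all add: Q1_def Q2_def P1_id[OF P1_in] P2_id[OF P2_in] R1_P1 R2_P2)

lemma Q1_P1: "Q1 (P1 x) = Q1 x" and Q2_P2: "Q2 (P2 y) = Q2 y"
  by (simp_all add: Q1_def Q2_def P1_id[OF P1_in] P2_id[OF P2_in])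

lemma A_Q1: "A (Q1 x) = Q2 (A x)" and adjoint_A_Q2: "adjoint A (Q2 y) = Q1 (adjoint A y)"
  by (simp_all add: Q1_def Q2_def R2_A A_P1 P2_A R1_P1 R1_adjoint_A adjoint_A_P2 P1_adjoint_A R2_P2)

lemma bounded_linear_S1: "bounded_linear S1" and bounded_linear_S2: "bounded_linear S2"
  unfolding S1_def S2_def
  by (simp_all add: bounded_linear_sqrt_id_minus nonexpansive_Q1 nonexpansive_Q2)

lemma selfadjoint_S1: "selfadjoint S1" and selfadjoint_S2: "selfadjoint S2"
  unfolding S1_def S2_def
  by (simp_all add: selfadjoint_sqrt_id_minus nonexpansive_Q1 nonexpansive_Q2
      selfadjoint_Q1 selfadjoint_Q2)

lemma S1_S1: "S1 (S1 x) = x - Q1 x" and S2_S2: "S2 (S2 y) = y - Q2 y"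
  unfolding S1_def S2_def
  by (simp_all add: sqrt_id_minus_square nonexpansive_Q1 nonexpansive_Q2)

lemma P1_S1: "P1 (S1 x) = S1 (P1 x)"
  unfolding S1_def
  by (rule sqrt_id_minus_commute[OF nonexpansive_Q1 nonexpansive_Q1 bounded_linear_P1]) (rule P1_Q1)

lemma P2_S2: "P2 (S2 y) = S2 (P2 y)"
  unfolding S2_def
  by (rule sqrt_id_minus_commute[OF nonexpansive_Q2 nonexpansive_Q2 bounded_linear_P2]) (rule P2_Q2)

lemma A_S1: "A (S1 x) = S2 (A x)"
  unfolding S1_def S2_def
  by (rule sqrt_id_minus_commute[OF nonexpansive_Q2 nonexpansive_Q1 bounded_linear_A]) (rule A_Q1)

lemma adjoint_A_S2: "adjoint A (S2 y) = S1 (adjoint A y)"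
  unfolding S1_def S2_def
  by (rule sqrt_id_minus_commute[OF nonexpansive_Q1 nonexpansive_Q2 bounded_linear_adjoint_A])
    (rule adjoint_A_Q2)

lemma S2_M2: "y \<in> M2 \<Longrightarrow> S2 y \<in> M2"
  using P2_in[of "S2 y"] by (simp add: P2_S2 P2_id)

text \<open>With \<open>z = R1 (P1 u)\<close> one has \<open>P1 u = z + A\<^sup>*A z\<close>, so
  \<open>\<parallel>S1 (P1 u)\<parallel>\<^sup>2 = \<langle>P1 u - z, P1 u\<rangle> = \<parallel>A z\<parallel>\<^sup>2 + \<parallel>A\<^sup>*A z\<parallel>\<^sup>2 \<le> \<parallel>A z + A A\<^sup>*A z\<parallel>\<^sup>2 = \<parallel>A u\<parallel>\<^sup>2\<close>.\<close>

lemma norm_S1_P1_le: "norm (S1 (P1 u)) \<le> norm (A u)"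
proof -
  interpret A: bounded_linear A by (rule bounded_linear_A)
  define z where "z = R1 (P1 u)"
  have P1u: "P1 u = z + adjoint A (A z)" using R1_right[of "P1 u"] by (simp add: z_def)
  have Q1u: "Q1 (P1 u) = z" by (simp add: Q1_def z_def P1_id[OF P1_in])
  have "norm (S1 (P1 u))^2 = inner (S1 (S1 (P1 u))) (P1 u)"
    using selfadjoint_S1 by (simp add: power2_norm_eq_inner selfadjoint_def)
  also have "\<dots> = inner (adjoint A (A z)) (z + adjoint A (A z))"
    unfolding S1_S1 Q1u by (simp add: P1u)
  also have "\<dots> = inner (A z) (A z) + inner (adjoint A (A z)) (adjoint A (A z))"
    by (simp add: inner_add_right adjoint_A(2))
  also have "\<dots> \<le> norm (A u)^2"
  proof -
    have "A u = A z + A (adjoint A (A z))" using A_P1[of u] P1u by (simp add: A.add)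
    moreover have "inner (A (adjoint A (A z))) (A z) = inner (adjoint A (A z)) (adjoint A (A z))"
      by (rule adjoint_A(1))
    ultimately have "norm (A u)^2 = inner (A z) (A z) + 2 * inner (adjoint A (A z)) (adjoint A (A z))
        + inner (A (adjoint A (A z))) (A (adjoint A (A z)))"
      by (simp add: power2_norm_eq_inner inner_add_left inner_add_right inner_commute)
    thus ?thesis by simp
  qed
  finally show ?thesis by (rule power2_le_imp_le) simp
qed

text \<open>\<open>Ct\<close> will be \<open>C\<^sup>*\<close> for \<open>C = B\<^sup>* (I + BB\<^sup>*)\<^sup>-\<^sup>1\<^sup>/\<^sup>2\<close>; as \<open>B\<^sup>*\<close> is unbounded, \<open>C\<close> is obtained as
  the adjoint of the factorization of \<open>S1 \<circ> P1\<close> through \<open>A\<close>.  \<open>TB\<close> is the operator \<open>T\<^sub>B\<close>.\<close>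

definition "Ct = (SOME h. bounded_linear h \<and> (\<forall>u. h (A u) = S1 (P1 u)) \<and>
                         (\<forall>y. adjoint A y = 0 \<longrightarrow> h y = 0))"
definition "C = adjoint Ct"
definition "TB y = Ct y + adjoint A (S2 y)"

lemma Ct:
  shows bounded_linear_Ct: "bounded_linear Ct" and Ct_A: "Ct (A u) = S1 (P1 u)"
    and Ct_kernel: "adjoint A y = 0 \<Longrightarrow> Ct y = 0"
proof -
  obtain h where "bounded_linear h" "\<And>u. h (A u) = S1 (P1 u)" "\<And>y. y \<in> (range A)\<^sup>\<bottom> \<Longrightarrow> h y = 0"
    using dominated_factorization[of "\<lambda>u. S1 (P1 u)" A] norm_S1_P1_le
      bounded_linear.linear[OF bounded_linear_compose[OF bounded_linear_S1 bounded_linear_P1]]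
      bounded_linear.linear[OF bounded_linear_A]
    by blast
  hence "\<exists>h. bounded_linear h \<and> (\<forall>u. h (A u) = S1 (P1 u)) \<and> (\<forall>y. adjoint A y = 0 \<longrightarrow> h y = 0)"
    using kernel_adjoint_A by blast
  hence "bounded_linear Ct \<and> (\<forall>u. Ct (A u) = S1 (P1 u)) \<and> (\<forall>y. adjoint A y = 0 \<longrightarrow> Ct y = 0)"
    unfolding Ct_def by (rule someI_ex)
  thus "bounded_linear Ct" "Ct (A u) = S1 (P1 u)" "adjoint A y = 0 \<Longrightarrow> Ct y = 0" by auto
qed

lemma bounded_linear_C: "bounded_linear C"
  unfolding C_def by (rule bounded_linear_adjoint[OF bounded_linear_Ct])

lemma C_inner: "inner (C w) y = inner w (Ct y)"
  unfolding C_def by (rule adjoint_works_hilbert'[OF bounded_linear_Ct])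

lemma adjoint_C: "adjoint C = Ct"
  unfolding C_def by (rule adjoint_adjoint_hilbert[OF bounded_linear_Ct])

lemma C_in_M2: "C w \<in> M2"
  unfolding M2_def orthogonal_comp_def orthogonal_def
  using C_inner Ct_kernel by (simp add: inner_commute)

lemma adjoint_A_C: "adjoint A (C w) = P1 (S1 w)"
proof (rule inner_right_eqI)
  fix u
  have "inner u (adjoint A (C w)) = inner (A u) (C w)" by (rule adjoint_A(1)[symmetric])
  also have "\<dots> = inner w (Ct (A u))" by (rule inner_commute[THEN trans, OF C_inner])
  also have "\<dots> = inner (Ct (A u)) w" by (rule inner_commute)
  also have "\<dots> = inner u (P1 (S1 w))"
    using selfadjoint_S1 selfadjoint_P1 by (simp add: Ct_A selfadjoint_def P1_S1)
  finally show "inner u (adjoint A (C w)) = inner u (P1 (S1 w))" .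
qed

lemma C_eqI: "z \<in> M2 \<Longrightarrow> adjoint A z = P1 (S1 w) \<Longrightarrow> C w = z"
  using M2_adjoint_A_inject[OF C_in_M2] adjoint_A_C by metis

lemma C_adjoint_A: "C (adjoint A y) = S2 (P2 y)"
  by (rule C_eqI[OF S2_M2[OF P2_in]])
    (simp add: adjoint_A_S2 adjoint_A_P2 P1_S1 P1_adjoint_A)

lemma C_S1: "C (S1 w) = S2 (C w)"
  by (rule C_eqI[OF S2_M2[OF C_in_M2]]) (simp add: adjoint_A_S2 adjoint_A_C P1_S1)

lemma S2_C: "S2 (C w) = A (R1 w)"
proof (rule M2_adjoint_A_inject[OF S2_M2[OF C_in_M2] A_in_M2])
  interpret R1: bounded_linear R1 by (rule bounded_linear_R1)
  interpret P1: bounded_linear P1 by (rule bounded_linear_P1)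
  have "R1 (w - P1 w) = w - P1 w"
    using A_P1 by (intro R1_kernel) (simp add: linear_diff[OF bounded_linear.linear[OF bounded_linear_A]])
  hence "P1 w - R1 (P1 w) = w - R1 w" by (simp add: R1.diff algebra_simps)
  hence "adjoint A (S2 (C w)) = w - R1 w"
    by (simp add: adjoint_A_S2 adjoint_A_C P1_S1 S1_S1 Q1_def P1.diff P1_id[OF P1_in])
  also have "\<dots> = adjoint A (A (R1 w))" using R1_right[of w] by (simp add: algebra_simps)
  finally show "adjoint A (S2 (C w)) = adjoint A (A (R1 w))" .
qed

lemma C_kernel: "A n = 0 \<Longrightarrow> C n = 0"
proof -
  assume "A n = 0"
  hence "P1 (S1 n) = 0"
    using P1_eq_0_iff[of n] linear_0[OF bounded_linear.linear[OF bounded_linear_S1]] by (simp add: P1_S1)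
  thus "C n = 0"
    using C_eqI[OF subspace_0[OF M2(1)], of n]
    by (simp add: linear_0[OF bounded_linear.linear[OF bounded_linear_adjoint_A]])
qed

lemma Ct_in_M1: "Ct y \<in> M1"
  unfolding M1_def orthogonal_comp_def orthogonal_def by (simp add: C_inner[symmetric] C_kernel)

lemma A_Ct: "A (Ct y) = P2 (S2 y)"
proof -
  have "adjoint (\<lambda>y. A (Ct y)) = (\<lambda>w. C (adjoint A w))"
    using adjoint_compose_hilbert[OF bounded_linear_A bounded_linear_Ct] by (simp add: C_def)
  also have "\<dots> = adjoint (\<lambda>y. P2 (S2 y))"
    using adjoint_compose_hilbert[OF bounded_linear_P2 bounded_linear_S2]
    by (simp add: C_adjoint_A adjoint_selfadjoint selfadjoint_S2 selfadjoint_P2)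
  finally have "(\<lambda>y. A (Ct y)) = (\<lambda>y. P2 (S2 y))"
    by (rule adjoint_inject_hilbert[OF bounded_linear_compose[OF bounded_linear_A bounded_linear_Ct]
          bounded_linear_compose[OF bounded_linear_P2 bounded_linear_S2]])
  thus ?thesis by metis
qed

lemma S1_Ct: "S1 (Ct y) = R1 (adjoint A y)"
proof -
  have "(\<lambda>y. S1 (Ct y)) = adjoint (\<lambda>w. C (S1 w))"
    using adjoint_compose_hilbert[OF bounded_linear_C bounded_linear_S1]
    by (simp add: adjoint_C adjoint_selfadjoint selfadjoint_S1)
  also have "(\<lambda>w. C (S1 w)) = (\<lambda>w. A (R1 w))" by (simp add: C_S1 S2_C)
  also have "adjoint \<dots> = (\<lambda>y. R1 (adjoint A y))"
    using adjoint_compose_hilbert[OF bounded_linear_A bounded_linear_R1]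
    by (simp add: adjoint_selfadjoint selfadjoint_R1)
  finally show ?thesis by metis
qed

lemma C_Ct: "C (Ct y) = Q2 y"
proof (rule C_eqI)
  show "Q2 y \<in> M2" by (simp add: Q2_def R2_P2 P2_in)
  show "adjoint A (Q2 y) = P1 (S1 (Ct y))"
    by (simp add: Q2_def adjoint_A_Q2[unfolded Q2_def] S1_Ct P1_adjoint_A R1_adjoint_A[symmetric]
        adjoint_A_P2 R1_P1[symmetric])
qed

lemma bounded_linear_TB: "bounded_linear TB"
  unfolding TB_def[abs_def]
  by (intro bounded_linear_add bounded_linear_Ct
      bounded_linear_compose[OF bounded_linear_adjoint_A bounded_linear_S2])

lemma TB_in_M1: "TB y \<in> M1"
  unfolding TB_def using subspace_add[OF M1(1) Ct_in_M1 adjoint_A_in_M1] .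

lemma C_TB: "C (TB y) = P2 y"
proof -
  interpret bounded_linear C by (rule bounded_linear_C)
  interpret P2: bounded_linear P2 by (rule bounded_linear_P2)
  have "S2 (P2 (S2 y)) = P2 y - Q2 y"
    by (simp add: P2_S2[symmetric] S2_S2 P2.diff P2_Q2 Q2_P2 P2_id[OF P2_in])
  thus ?thesis by (simp add: TB_def add C_Ct C_adjoint_A)
qed

lemma TB_C: "TB (C w) = P1 w"
proof (rule M1_A_inject[OF TB_in_M1 P1_in])
  interpret A: bounded_linear A by (rule bounded_linear_A)
  have "A (TB (C w)) = S2 (C w) + A (adjoint A (S2 (C w)))"
    by (simp add: TB_def A.add A_Ct P2_id[OF S2_M2[OF C_in_M2]])
  also have "\<dots> = A w" by (simp add: S2_C R2_A[symmetric] R2_right)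
  finally show "A (TB (C w)) = A (P1 w)" by (simp add: A_P1)
qed

lemma adjoint_TB: "adjoint TB = (\<lambda>w. C w + A (S1 w))"
proof -
  have "adjoint TB = (\<lambda>w. adjoint Ct w + adjoint (\<lambda>y. adjoint A (S2 y)) w)"
    unfolding TB_def[abs_def]
    by (rule adjoint_add_hilbert[OF bounded_linear_Ct
          bounded_linear_compose[OF bounded_linear_adjoint_A bounded_linear_S2]])
  also have "adjoint (\<lambda>y. adjoint A (S2 y)) = (\<lambda>w. S2 (A w))"
    using adjoint_compose_hilbert[OF bounded_linear_adjoint_A bounded_linear_S2]
    by (simp add: adjoint_selfadjoint selfadjoint_S2 adjoint_adjoint_A)
  finally show ?thesis by (simp add: C_def[symmetric] A_S1)
qed

lemma range_C: "range C = M2"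
  using C_in_M2 C_TB P2_id by (metis image_subset_iff rangeI subsetI subset_antisym)

lemma range_TB: "range TB = M1"
  using TB_in_M1 TB_C P1_id by (metis image_subset_iff rangeI subsetI subset_antisym)

end

section \<open>The Moore--Penrose inverse of a bounded operator\<close>

locale bounded_op_mp_inverse = bounded_hilbert_op A
  for A :: "'a::{real_inner,complete_space} \<Rightarrow> 'b::{real_inner,complete_space}" +
  fixes B :: "('b \<times> 'a) set"
  assumes mp_inverse: "is_mp_inverse (fgraph A) B"
begin

lemma op_adjoint_A: "op_adjoint (fgraph A) = fgraph (adjoint A)"
  by (rule op_adjoint_fgraph[OF bounded_linear_A])

lemma subspace_B: "subspace B" and B_0: "(0, z) \<in> B \<Longrightarrow> z = 0"
  using mp_inverse by (auto simp: is_mp_inverse_def closed_densely_defined_def is_operator_def)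

lemma B_functional: "(y, z) \<in> B \<Longrightarrow> (y, z') \<in> B \<Longrightarrow> z = z'"
  using subspace_diff[OF subspace_B, of "(y, z)" "(y, z')"] B_0[of "z - z'"] by simp

lemma Domain_B: "Domain B = {u + v |u v. u \<in> range A \<and> adjoint A v = 0}"
  using mp_inverse by (simp add: is_mp_inverse_def op_adjoint_A op_kernel_fgraph Range_fgraph)

lemma B_kernel: "(v, 0) \<in> B \<longleftrightarrow> adjoint A v = 0"
proof -
  have "op_kernel B = {v. adjoint A v = 0}"
    using mp_inverse by (simp add: is_mp_inverse_def op_adjoint_A op_kernel_fgraph)
  thus ?thesis by (auto simp: op_kernel_def)
qed

lemma closure_Range_B: "subspace (closure (Range B))" "closed (closure (Range B))"
proof -
  have "Range B = snd ` B" by force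
  hence "subspace (Range B)" using subspace_B linear_snd by (metis linear_subspace_image)
  thus "subspace (closure (Range B))" "closed (closure (Range B))" by (simp_all add: subspace_closure)
qed

text \<open>From \<open>B A \<subseteq> P\<^bsub>closure (Range B)\<^esub>\<close> and \<open>A B A = A\<close> one reads off \<open>closure (Range B) = M1\<close>,
  and then \<open>B (A x + v) = P1 x\<close> for \<open>v \<in> N(A\<^sup>*)\<close>.\<close>

lemma B_A: "(A x, proj_onto (closure (Range B)) x) \<in> B"
proof -
  have "A x + 0 \<in> Domain B"
    unfolding Domain_B using linear_0[OF bounded_linear.linear[OF bounded_linear_adjoint_A]] by blast
  then obtain z where z: "(A x, z) \<in> B" by auto
  hence "(x, z) \<in> op_comp B (fgraph A)" by (auto simp: op_comp_def fgraph_def)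
  moreover have "op_comp B (fgraph A) \<subseteq> fgraph (proj_onto (closure (Range B)))"
    using mp_inverse by (simp add: is_mp_inverse_def orth_proj_eq_fgraph[OF closure_Range_B])
  ultimately have "z = proj_onto (closure (Range B)) x" by (auto simp: fgraph_iff)
  thus ?thesis using z by simp
qed

lemma A_proj_onto_closure_Range_B: "A (proj_onto (closure (Range B)) x) = A x"
proof -
  have "(x, A (proj_onto (closure (Range B)) x)) \<in> op_comp (fgraph A) (op_comp B (fgraph A))"
    using B_A by (auto simp: op_comp_def fgraph_def)
  thus ?thesis using mp_inverse by (simp add: is_mp_inverse_def fgraph_iff)
qed

lemma closure_Range_B_eq: "closure (Range B) = M1"
proof
  let ?K = "closure (Range B)"
  have "{x. A x = 0} \<subseteq> ?K\<^sup>\<bottom>"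
  proof
    fix n assume "n \<in> {x. A x = 0}"
    hence "(0, proj_onto ?K n) \<in> B" using B_A[of n] by simp
    thus "n \<in> ?K\<^sup>\<bottom>" using B_0 proj_onto_eq_0_iff[OF closure_Range_B] by blast
  qed
  thus K_M1: "?K \<subseteq> M1"
    using orthogonal_comp_anti_mono orthogonal_comp_orthogonal_comp[OF closure_Range_B]
    unfolding M1_def by metis
  show "M1 \<subseteq> ?K"
  proof
    fix m assume m: "m \<in> M1"
    define d where "d = m - proj_onto ?K m"
    have "A d = 0"
      using A_proj_onto_closure_Range_B[of m]
      by (simp add: d_def linear_diff[OF bounded_linear.linear[OF bounded_linear_A]])
    hence "inner d m = 0" "inner d (proj_onto ?K m) = 0"
      using m K_M1 proj_onto_in[OF closure_Range_B, of m]
      by (auto simp: M1_def orthogonal_comp_def orthogonal_def)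
    hence "inner d d = 0" unfolding d_def by (simp add: inner_diff_right)
    hence "d = 0" by simp
    thus "m \<in> ?K" using proj_onto_in[OF closure_Range_B, of m] by (simp add: d_def)
  qed
qed

lemma A_P1_in_B: "(A x, P1 x) \<in> B"
  using B_A by (simp add: closure_Range_B_eq P1_def)

lemma mem_B_iff: "(y, z) \<in> B \<longleftrightarrow> (\<exists>x v. adjoint A v = 0 \<and> y = A x + v \<and> z = P1 x)"
proof -
  have in_B: "(A x + v, P1 x) \<in> B" if "adjoint A v = 0" for x v
    using subspace_add[OF subspace_B A_P1_in_B[of x] B_kernel[THEN iffD2, OF that]] by simp
  show ?thesis
  proof
    assume yz: "(y, z) \<in> B"
    then obtain x v where xv: "y = A x + v" "adjoint A v = 0" using Domain_B by blast
    hence "z = P1 x" using B_functional[OF yz] in_B[OF xv(2)] by simp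
    thus "\<exists>x v. adjoint A v = 0 \<and> y = A x + v \<and> z = P1 x" using xv by blast
  qed (use in_B in blast)
qed

lemma mem_adjoint_B_iff: "(y, z) \<in> op_adjoint B \<longleftrightarrow> z \<in> M2 \<and> adjoint A z = P1 y"
proof
  assume "(y, z) \<in> op_adjoint B"
  hence h: "\<And>u w. (u, w) \<in> B \<Longrightarrow> inner w y = inner u z" by (auto simp: op_adjoint_def)
  have "inner v z = 0" if "adjoint A v = 0" for v using h[of v 0] B_kernel that by simp
  hence "z \<in> M2" by (simp add: M2_def orthogonal_comp_def orthogonal_def)
  moreover have "adjoint A z = P1 y"
  proof (rule inner_right_eqI)
    fix x
    have "inner (P1 x) y = inner (A x) z" by (rule h[OF A_P1_in_B])
    thus "inner x (adjoint A z) = inner x (P1 y)"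
      using selfadjoint_P1 by (simp add: adjoint_A(1)[symmetric] selfadjoint_def)
  qed
  ultimately show "z \<in> M2 \<and> adjoint A z = P1 y" ..
next
  assume z: "z \<in> M2 \<and> adjoint A z = P1 y"
  have "inner (P1 x) y = inner (A x + v) z" if "adjoint A v = 0" for x v
  proof -
    have "inner v z = 0" using z that by (simp add: M2_def orthogonal_comp_def orthogonal_def)
    thus ?thesis
      using z selfadjoint_P1 by (simp add: inner_add_left adjoint_A(1) selfadjoint_def)
  qed
  thus "(y, z) \<in> op_adjoint B" unfolding op_adjoint_def by (auto simp: mem_B_iff)
qed

lemma resolvent_B_adjoint_B: "converse (op_add Id (op_comp B (op_adjoint B))) = fgraph (\<lambda>x. x - Q1 x)"
proof (rule fgraph_eqI)
  interpret P1: bounded_linear P1 by (rule bounded_linear_P1)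
  fix t y
  have "(t, y) \<in> converse (op_add Id (op_comp B (op_adjoint B))) \<longleftrightarrow>
      (\<exists>c z. t = y + c \<and> (y, z) \<in> op_adjoint B \<and> (z, c) \<in> B)"
    by (auto simp: op_add_def op_comp_def)
  also have "\<dots> \<longleftrightarrow> (\<exists>c z x v. t = y + c \<and> z \<in> M2 \<and> adjoint A z = P1 y \<and>
      adjoint A v = 0 \<and> z = A x + v \<and> c = P1 x)" (is "_ \<longleftrightarrow> ?graph")
    by (simp add: mem_adjoint_B_iff mem_B_iff)
  also have "\<dots> \<longleftrightarrow> y = t - Q1 t"
  proof
    assume ?graph
    then obtain c z x v where h: "t = y + c" "z \<in> M2" "adjoint A z = P1 y" "adjoint A v = 0"
      "z = A x + v" "c = P1 x"
      by blast
    have "v = z - A x" using h(5) by simp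
    hence "v \<in> M2" using subspace_diff[OF M2(1) h(2) A_in_M2] by simp
    hence "z = A x" using M2_eq_0 h(4,5) by simp
    hence "c + adjoint A (A c) = P1 t" using h by (simp add: A_P1 P1.add P1_id[OF P1_in] add.commute)
    hence "c = Q1 t" using R1_left[of c] by (simp add: Q1_def)
    thus "y = t - Q1 t" using h(1) by simp
  next
    assume y: "y = t - Q1 t"
    define c where "c = Q1 t"
    have "P1 c = c" by (simp add: c_def P1_Q1 Q1_P1)
    moreover have "adjoint A (A c) = P1 t - c"
      using R1_right[of "P1 t"] by (simp add: c_def Q1_def algebra_simps)
    ultimately have "t = y + c \<and> A c \<in> M2 \<and> adjoint A (A c) = P1 y \<and> adjoint A 0 = 0 \<and>
        A c = A c + 0 \<and> c = P1 c"
      using y A_in_M2 linear_0[OF bounded_linear.linear[OF bounded_linear_adjoint_A]]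
      by (simp add: c_def P1.diff)
    thus ?graph by blast
  qed
  finally show "(t, y) \<in> converse (op_add Id (op_comp B (op_adjoint B))) \<longleftrightarrow> y = t - Q1 t" .
qed

lemma resolvent_adjoint_B_B: "converse (op_add Id (op_comp (op_adjoint B) B)) = fgraph (\<lambda>y. y - Q2 y)"
proof (rule fgraph_eqI)
  interpret P2: bounded_linear P2 by (rule bounded_linear_P2)
  interpret Aa: bounded_linear "adjoint A" by (rule bounded_linear_adjoint_A)
  fix t y
  have "(t, y) \<in> converse (op_add Id (op_comp (op_adjoint B) B)) \<longleftrightarrow>
      (\<exists>c z. t = y + c \<and> (y, z) \<in> B \<and> (z, c) \<in> op_adjoint B)"
    by (auto simp: op_add_def op_comp_def)
  also have "\<dots> \<longleftrightarrow> (\<exists>c x v. t = y + c \<and> adjoint A v = 0 \<and> y = A x + v \<and> c \<in> M2 \<and>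
      adjoint A c = P1 (P1 x))" (is "_ \<longleftrightarrow> ?graph")
    by (simp add: mem_adjoint_B_iff mem_B_iff) blast
  also have "\<dots> \<longleftrightarrow> y = t - Q2 t"
  proof
    assume ?graph
    then obtain c x v where h: "t = y + c" "adjoint A v = 0" "y = A x + v" "c \<in> M2"
      "adjoint A c = P1 (P1 x)"
      by blast
    have "c + A (adjoint A c) = P2 t"
      using h P2_eq_0_iff[of v] by (simp add: P1_id[OF P1_in] A_P1 P2.add P2_A P2_id add.commute)
    hence "c = Q2 t" using R2_left[of c] by (simp add: Q2_def)
    thus "y = t - Q2 t" using h(1) by simp
  next
    assume y: "y = t - Q2 t"
    define c where "c = Q2 t"
    have c: "c \<in> M2" by (simp add: c_def Q2_def R2_P2 P2_in)
    have "c + A (adjoint A c) = P2 t" using R2_right[of "P2 t"] by (simp add: c_def Q2_def)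
    hence "adjoint A c + adjoint A (A (adjoint A c)) = adjoint A t"
      using adjoint_A_P2[of t] by (metis Aa.add)
    moreover have "adjoint A (y - A (adjoint A c)) = adjoint A t - adjoint A c - adjoint A (A (adjoint A c))"
      using y by (simp add: c_def[symmetric] Aa.diff)
    ultimately have "adjoint A (y - A (adjoint A c)) = 0" by (simp add: algebra_simps)
    moreover have "y = A (adjoint A c) + (y - A (adjoint A c))" by simp
    ultimately have "t = y + c \<and> adjoint A (y - A (adjoint A c)) = 0 \<and> y = A (adjoint A c) + (y - A (adjoint A c))
        \<and> c \<in> M2 \<and> adjoint A c = P1 (P1 (adjoint A c))"
      using y c by (simp add: c_def P1_adjoint_A)
    thus ?graph by blast
  qed
  finally show "(t, y) \<in> converse (op_add Id (op_comp (op_adjoint B) B)) \<longleftrightarrow> y = t - Q2 t" .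
qed

lemma inv_sqrt_I_plus_BBs: "inv_sqrt_I_plus_TTs B = fgraph S1"
  unfolding inv_sqrt_I_plus_TTs_def resolvent_B_adjoint_B S1_def
  by (rule op_sqrt_fgraph[OF nonexpansive_Q1 selfadjoint_Q1])

lemma inv_sqrt_I_plus_BsB: "inv_sqrt_I_plus_TsT B = fgraph S2"
  unfolding inv_sqrt_I_plus_TsT_def resolvent_adjoint_B_B S2_def
  by (rule op_sqrt_fgraph[OF nonexpansive_Q2 selfadjoint_Q2])

lemma op_comp_adjoint_B_S1: "op_comp (op_adjoint B) (fgraph S1) = fgraph C"
proof (rule fgraph_eqI)
  fix w z
  have "(w, z) \<in> op_comp (op_adjoint B) (fgraph S1) \<longleftrightarrow> z \<in> M2 \<and> adjoint A z = P1 (S1 w)"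
    by (auto simp: op_comp_def fgraph_def mem_adjoint_B_iff)
  also have "\<dots> \<longleftrightarrow> z = C w" using C_eqI C_in_M2 adjoint_A_C by metis
  finally show "(w, z) \<in> op_comp (op_adjoint B) (fgraph S1) \<longleftrightarrow> z = C w" .
qed

lemma op_comp_B_S2: "op_comp B (fgraph S2) = fgraph Ct"
proof (rule fgraph_eqI)
  fix y z
  have "S2 y = A (Ct y) + (S2 y - P2 (S2 y))" by (simp add: A_Ct)
  moreover have "adjoint A (S2 y - P2 (S2 y)) = 0"
    by (simp add: adjoint_A_P2 linear_diff[OF bounded_linear.linear[OF bounded_linear_adjoint_A]])
  ultimately have "(S2 y, Ct y) \<in> B" using mem_B_iff P1_id[OF Ct_in_M1] by metis
  hence "(S2 y, z) \<in> B \<longleftrightarrow> z = Ct y" using B_functional by blast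
  thus "(y, z) \<in> op_comp B (fgraph S2) \<longleftrightarrow> z = Ct y" by (auto simp: op_comp_def fgraph_def)
qed

end

theorem theorem3p5:
  fixes A :: "'a::{real_inner, complete_space} \<Rightarrow> 'b::{real_inner, complete_space}"
    and B :: "('b \<times> 'a) set"
  assumes "bounded_linear A"
    and "is_mp_inverse (fgraph A) B"
  shows "bounded_op (op_comp (op_adjoint B) (inv_sqrt_I_plus_TTs B))
    \<and> closed (Range (op_comp (op_adjoint B) (inv_sqrt_I_plus_TTs B)))
    \<and> bounded_op (op_add (op_comp B (inv_sqrt_I_plus_TsT B))
                          (op_comp (op_adjoint (fgraph A)) (inv_sqrt_I_plus_TsT B)))
    \<and> is_mp_inverse (op_comp (op_adjoint B) (inv_sqrt_I_plus_TTs B))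
         (op_add (op_comp B (inv_sqrt_I_plus_TsT B))
                 (op_comp (op_adjoint (fgraph A)) (inv_sqrt_I_plus_TsT B)))
    \<and> op_adjoint (op_add (op_comp B (inv_sqrt_I_plus_TsT B))
                 (op_comp (op_adjoint (fgraph A)) (inv_sqrt_I_plus_TsT B)))
      = op_add (op_comp (op_adjoint B) (inv_sqrt_I_plus_TTs B))
               (op_comp (fgraph A) (inv_sqrt_I_plus_TTs B))"
proof -
  interpret bounded_op_mp_inverse A B
    using assms
    by (simp add: bounded_op_mp_inverse_def bounded_hilbert_op_def bounded_op_mp_inverse_axioms_def)
  have C: "op_comp (op_adjoint B) (inv_sqrt_I_plus_TTs B) = fgraph C"
    by (simp add: inv_sqrt_I_plus_BBs op_comp_adjoint_B_S1)
  have TB: "op_add (op_comp B (inv_sqrt_I_plus_TsT B))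
      (op_comp (op_adjoint (fgraph A)) (inv_sqrt_I_plus_TsT B)) = fgraph TB"
    by (simp add: inv_sqrt_I_plus_BsB op_comp_B_S2 op_adjoint_A op_comp_fgraph op_add_fgraph
        TB_def[abs_def])
  have TB_adjoint: "op_add (op_comp (op_adjoint B) (inv_sqrt_I_plus_TTs B))
      (op_comp (fgraph A) (inv_sqrt_I_plus_TTs B)) = fgraph (adjoint TB)"
    unfolding C by (simp add: inv_sqrt_I_plus_BBs op_comp_fgraph op_add_fgraph adjoint_TB)
  have "is_mp_inverse (fgraph C) (fgraph TB)"
    using bounded_linear_C bounded_linear_TB M1 M2 C_TB TB_C
    by (intro is_mp_inverse_fgraphI) (simp_all add: range_C range_TB P1_def P2_def)
  thus ?thesis
    unfolding TB_adjoint unfolding C TB bounded_op_def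
    using bounded_linear_C bounded_linear_TB
    by (auto simp: Range_fgraph range_C M2 op_adjoint_fgraph[OF bounded_linear_TB])
qed

end
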